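(* Let $M$ be a matroid on $E=[n]$, $t,u$ positive integers, and $\mathcal F$ the regular mixed subdivision of $u\Delta+P(M)+t\nabla$ defined below. Every lattice point of $u\Delta+P(M)+t\nabla$ lies in some top-degree face of $\mathcal F$.
   Context: $M$ is a matroid on $E=[n]=\{1,\dots,n\}$, ordered naturally. $P(M)\subseteq\mathbb R^E$ is the convex hull of the indicator vectors $\mathbf e_B$ of bases $B$. For nonempty $S\subseteq E$, $\Delta_S=\operatorname{conv}\{\mathbf e_i:i\in S\}$, $\nabla_S=-\Delta_S$, $\Delta=\Delta_E$, $\nabla=\nabla_E$. The subdivision: fix positive integers $t,u$ and reals $0<\alpha_1<\dots<\alpha_n$, $0<\beta_1<\dots<\beta_n$. Let $\mathit{Lift}=\operatorname{conv}\{(u\mathbf e_i,\alpha_i)\}+(P(M)\times\{0\})+\operatorname{conv}\{(-t\mathbf e_i,\beta_i)\}\subseteq\mathbb R^E\times\mathbb R$. The lower faces of $\mathit{Lift}$ are the faces on which some linear functional with last coordinate $-1$ attains its maximum; their projections to $\mathbb R^E$ form the regular mixed subdivision $\mathcal F$ of $u\Delta+P(M)+t\nabla$. Each cell is canonically written $F+G+H$ where $F$, $G$, $H$ are the projections of the faces of the three summands of $\mathit{Lift}$ maximizing the same functional, so $F$ is a face of $u\Delta$, $G$ a face of $P(M)$, $H$ a face of $t\nabla$. A top-degree face is a maximal cell $F+G+H$ of $\mathcal F$ in which $G$ is a vertex of $P(M)$. *)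

theory Defs
  imports Complex_Main
begin

text \<open>Points of R^E, E = {1..n}, are represented as functions nat => real
  (coordinates outside E are 0 for all points that occur).  Points of R^E x R
  (the lifting space) are pairs.\<close>

type_synonym vec = "nat \<Rightarrow> real"
type_synonym lvec = "(nat \<Rightarrow> real) \<times> real"

definition ground :: "nat \<Rightarrow> nat set" where
  "ground n = {1..n}"

definition matroid_bases :: "nat \<Rightarrow> nat set set \<Rightarrow> bool" where
  "matroid_bases n \<B> \<longleftrightarrow>
     \<B> \<noteq> {} \<and> (\<forall>B\<in>\<B>. B \<subseteq> ground n) \<and>
     (\<forall>B1\<in>\<B>. \<forall>B2\<in>\<B>. \<forall>x\<in>B1 - B2. \<exists>y\<in>B2 - B1. insert y (B1 - {x}) \<in> \<B>)"

definition unitv :: "nat \<Rightarrow> vec" where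
  "unitv i = (\<lambda>j. if j = i then 1 else 0)"

definition indic :: "nat set \<Rightarrow> vec" where
  "indic B = (\<lambda>j. if j \<in> B then 1 else 0)"

definition conv :: "vec set \<Rightarrow> vec set" where
  "conv A = {y. \<exists>S c. finite S \<and> S \<subseteq> A \<and> S \<noteq> {} \<and> (\<forall>a\<in>S. c a \<ge> 0) \<and> sum c S = 1 \<and>
                    y = (\<lambda>i. \<Sum>a\<in>S. c a * a i)}"

definition lconv :: "lvec set \<Rightarrow> lvec set" where
  "lconv A = {y. \<exists>S c. finite S \<and> S \<subseteq> A \<and> S \<noteq> {} \<and> (\<forall>a\<in>S. c a \<ge> 0) \<and> sum c S = 1 \<and>
                    y = ((\<lambda>i. \<Sum>a\<in>S. c a * fst a i), (\<Sum>a\<in>S. c a * snd a))}"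

definition msum :: "vec set \<Rightarrow> vec set \<Rightarrow> vec set" where
  "msum A B = {(\<lambda>i. a i + b i) | a b. a \<in> A \<and> b \<in> B}"

definition lmsum :: "lvec set \<Rightarrow> lvec set \<Rightarrow> lvec set" where
  "lmsum A B = {((\<lambda>i. fst a i + fst b i), snd a + snd b) | a b. a \<in> A \<and> b \<in> B}"

definition matroid_polytope :: "nat set set \<Rightarrow> vec set" where
  "matroid_polytope \<B> = conv (indic ` \<B>)"

definition simplex :: "nat \<Rightarrow> vec set" where
  "simplex n = conv (unitv ` ground n)"

definition scale_set :: "real \<Rightarrow> vec set \<Rightarrow> vec set" where
  "scale_set r A = (\<lambda>a i. r * a i) ` A"

definition lfun :: "nat \<Rightarrow> vec \<Rightarrow> lvec \<Rightarrow> real" where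
  "lfun n w p = (\<Sum>i\<in>ground n. w i * fst p i) - snd p"

definition argmax_face :: "(lvec \<Rightarrow> real) \<Rightarrow> lvec set \<Rightarrow> lvec set" where
  "argmax_face f S = {x\<in>S. \<forall>y\<in>S. f y \<le> f x}"

definition lift_Delta :: "nat \<Rightarrow> nat \<Rightarrow> vec \<Rightarrow> lvec set" where
  "lift_Delta n u \<alpha> = lconv ((\<lambda>i. (\<lambda>j. real u * unitv i j, \<alpha> i)) ` ground n)"

definition lift_P :: "nat set set \<Rightarrow> lvec set" where
  "lift_P \<B> = (\<lambda>x. (x, 0)) ` matroid_polytope \<B>"

definition lift_Nabla :: "nat \<Rightarrow> nat \<Rightarrow> vec \<Rightarrow> lvec set" where
  "lift_Nabla n t \<beta> = lconv ((\<lambda>i. (\<lambda>j. - real t * unitv i j, \<beta> i)) ` ground n)"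

definition Lift :: "nat \<Rightarrow> nat set set \<Rightarrow> nat \<Rightarrow> nat \<Rightarrow> vec \<Rightarrow> vec \<Rightarrow> lvec set" where
  "Lift n \<B> t u \<alpha> \<beta> = lmsum (lmsum (lift_Delta n u \<alpha>) (lift_P \<B>)) (lift_Nabla n t \<beta>)"

text \<open>The lower face of Lift maximised by the functional (w,-1), projected to R^E:
  a cell of the regular mixed subdivision.\<close>
definition cell :: "nat \<Rightarrow> nat set set \<Rightarrow> nat \<Rightarrow> nat \<Rightarrow> vec \<Rightarrow> vec \<Rightarrow> vec \<Rightarrow> vec set" where
  "cell n \<B> t u \<alpha> \<beta> w = fst ` argmax_face (lfun n w) (Lift n \<B> t u \<alpha> \<beta>)"

text \<open>The G-part of the canonical decomposition F+G+H of the cell for w.\<close>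
definition cellG :: "nat \<Rightarrow> nat set set \<Rightarrow> vec \<Rightarrow> vec set" where
  "cellG n \<B> w = fst ` argmax_face (lfun n w) (lift_P \<B>)"

definition cellF :: "nat \<Rightarrow> nat \<Rightarrow> vec \<Rightarrow> vec \<Rightarrow> vec set" where
  "cellF n u \<alpha> w = fst ` argmax_face (lfun n w) (lift_Delta n u \<alpha>)"

definition cellH :: "nat \<Rightarrow> nat \<Rightarrow> vec \<Rightarrow> vec \<Rightarrow> vec set" where
  "cellH n t \<beta> w = fst ` argmax_face (lfun n w) (lift_Nabla n t \<beta>)"

definition subdivision :: "nat \<Rightarrow> nat set set \<Rightarrow> nat \<Rightarrow> nat \<Rightarrow> vec \<Rightarrow> vec \<Rightarrow> vec set set" where
  "subdivision n \<B> t u \<alpha> \<beta> = range (cell n \<B> t u \<alpha> \<beta>)"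

definition top_degree_face :: "nat \<Rightarrow> nat set set \<Rightarrow> nat \<Rightarrow> nat \<Rightarrow> vec \<Rightarrow> vec \<Rightarrow> vec set \<Rightarrow> bool" where
  "top_degree_face n \<B> t u \<alpha> \<beta> C \<longleftrightarrow>
     C \<in> subdivision n \<B> t u \<alpha> \<beta> \<and>
     (\<forall>C'\<in>subdivision n \<B> t u \<alpha> \<beta>. C \<subseteq> C' \<longrightarrow> C' = C) \<and>
     (\<exists>w. C = cell n \<B> t u \<alpha> \<beta> w \<and> (\<exists>B\<in>\<B>. cellG n \<B> w = {indic B}))"

definition mixed_polytope :: "nat \<Rightarrow> nat set set \<Rightarrow> nat \<Rightarrow> nat \<Rightarrow> vec set" where
  "mixed_polytope n \<B> t u =
     msum (msum (scale_set (real u) (simplex n)) (matroid_polytope \<B>))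
          (scale_set (- real t) (simplex n))"

end

theory Submission
  imports Defs
begin

text \<open>Induction on n pushes the integral point x to a vertex e_B of P(M): the last element k is
  contracted if x_k \<ge> 1 and deleted if x_k \<le> 0, and the projection of the matroid polytope onto
  the minor keeps x - p inside u\<Delta> + t\<nabla>.  This produces a basis B and a set S such that
  x - e_B lies in u\<Delta> + t\<nabla>, is positive only on S and negative only off S, and B is the
  unique heaviest basis for the weight w_S (w_i = \<alpha>_i/u on S and \<alpha>_1/u + (\<beta>_1 - \<beta>_i)/t off S).
  Because \<alpha> and \<beta> increase, the new element is the heaviest one when put into S and the
  lightest otherwise, which is what keeps B unique through the induction.

  The face of Lift maximised by (w_S, -1) has G = {e_B}, and its projection contains
  u e_i + e_B - t e_k for all i \<in> S \<union> {1} and all k \<notin> S or k = 1.  Any functional whose cell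
  contains these points differs from w_S by a constant on [n], so the cell is maximal; and x is
  a convex combination of these points.\<close>

lemma finite_ground [simp]: "finite (ground n)"
  by (simp add: ground_def)

lemma ground_Suc: "ground (Suc n) = insert (Suc n) (ground n)"
  by (auto simp: ground_def)

lemma Suc_notin_ground [simp]: "Suc n \<notin> ground n"
  by (simp add: ground_def)

section \<open>Bases of a matroid\<close>

lemma matroid_bases_subset_ground: "matroid_bases n \<B> \<Longrightarrow> B \<in> \<B> \<Longrightarrow> B \<subseteq> ground n"
  by (auto simp: matroid_bases_def)

lemma matroid_bases_finite: "matroid_bases n \<B> \<Longrightarrow> B \<in> \<B> \<Longrightarrow> finite B"
  by (rule finite_subset[OF matroid_bases_subset_ground finite_ground])

lemma matroid_bases_exchange:
  "matroid_bases n \<B> \<Longrightarrow> B1 \<in> \<B> \<Longrightarrow> B2 \<in> \<B> \<Longrightarrow> x \<in> B1 - B2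
   \<Longrightarrow> \<exists>y\<in>B2 - B1. insert y (B1 - {x}) \<in> \<B>"
  unfolding matroid_bases_def by blast

lemma matroid_bases_card_eq:
  assumes mb: "matroid_bases n \<B>" and "B1 \<in> \<B>" and B2: "B2 \<in> \<B>"
  shows "card B1 = card B2"
  using \<open>B1 \<in> \<B>\<close>
proof (induction "card (B1 - B2)" arbitrary: B1 rule: less_induct)
  case less
  show ?case
  proof (cases "B1 - B2 = {}")
    case True
    have "B2 - B1 = {}"
    proof (rule ccontr)
      assume "B2 - B1 \<noteq> {}"
      then obtain z where "z \<in> B2 - B1" by blast
      then show False using matroid_bases_exchange[OF mb B2 less.prems] True by auto
    qed
    with True show ?thesis by (metis Diff_eq_empty_iff subset_antisym)
  next
    case False
    then obtain z where z: "z \<in> B1 - B2" by blast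
    obtain y where y: "y \<in> B2 - B1" "insert y (B1 - {z}) \<in> \<B>"
      using matroid_bases_exchange[OF mb less.prems B2 z] by blast
    have fin: "finite B1" using matroid_bases_finite[OF mb less.prems] .
    have "insert y (B1 - {z}) - B2 = (B1 - B2) - {z}" using y by auto
    then have "card (insert y (B1 - {z}) - B2) < card (B1 - B2)"
      using z fin by (metis card_Diff1_less finite_Diff)
    then have "card (insert y (B1 - {z})) = card B2" by (rule less.hyps[OF _ y(2)])
    moreover have "card (insert y (B1 - {z})) = Suc (card (B1 - {z}))"
      using fin y by (intro card_insert_disjoint) auto
    moreover have "Suc (card (B1 - {z})) = card B1" using fin z by (intro card_Suc_Diff1) auto
    ultimately show ?thesis by simp
  qed
qed

lemma matroid_bases_exchange_into:
  assumes mb: "matroid_bases n \<B>" and D: "D \<in> \<B>" "k \<in> D" and B: "B \<in> \<B>" "k \<notin> B"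
  shows "\<exists>e\<in>B. insert k (B - {e}) \<in> \<B>"
  using D
proof (induction "card (D - B)" arbitrary: D rule: less_induct)
  case less
  show ?case
  proof (cases "D - B = {k}")
    case True
    obtain y where y: "y \<in> B - D" using matroid_bases_exchange[OF mb less.prems(1) B(1), of k] True by auto
    then obtain y' where "y' \<in> D - B" "insert y' (B - {y}) \<in> \<B>"
      using matroid_bases_exchange[OF mb B(1) less.prems(1)] by blast
    with True y show ?thesis by auto
  next
    case False
    then obtain z where z: "z \<in> D - B" "z \<noteq> k" using less.prems B by blast
    obtain y where y: "y \<in> B - D" "insert y (D - {z}) \<in> \<B>"
      using matroid_bases_exchange[OF mb less.prems(1) B(1) z(1)] by blast
    have "insert y (D - {z}) - B = (D - B) - {z}" using y by auto
    then have "card (insert y (D - {z}) - B) < card (D - B)"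
      using z matroid_bases_finite[OF mb less.prems(1)] by (metis card_Diff1_less finite_Diff)
    moreover have "k \<in> insert y (D - {z})" using z less.prems(2) by blast
    ultimately show ?thesis by (rule less.hyps[OF _ y(2)])
  qed
qed

section \<open>Deletion and contraction\<close>

text \<open>Bases of the contraction M/k and of the deletion M\k; contracting a loop deletes it and
  deleting a coloop contracts it.\<close>
definition contract_bases :: "nat \<Rightarrow> nat set set \<Rightarrow> nat set set" where
  "contract_bases k \<B> = (if \<exists>D\<in>\<B>. k \<in> D then (\<lambda>D. D - {k}) ` {D\<in>\<B>. k \<in> D} else \<B>)"

definition delete_bases :: "nat \<Rightarrow> nat set set \<Rightarrow> nat set set" where
  "delete_bases k \<B> = (if \<exists>D\<in>\<B>. k \<notin> D then {D\<in>\<B>. k \<notin> D} else (\<lambda>D. D - {k}) ` \<B>)"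

lemma matroid_bases_avoiding:
  assumes mb: "matroid_bases (Suc n) \<B>" and ex: "\<exists>D\<in>\<B>. Suc n \<notin> D"
  shows "matroid_bases n {D\<in>\<B>. Suc n \<notin> D}"
  unfolding matroid_bases_def
proof (intro conjI ballI)
  show "{D \<in> \<B>. Suc n \<notin> D} \<noteq> {}" using ex by auto
next
  fix B assume "B \<in> {D \<in> \<B>. Suc n \<notin> D}"
  then show "B \<subseteq> ground n" using matroid_bases_subset_ground[OF mb] by (fastforce simp: ground_Suc)
next
  fix B1 B2 x assume B: "B1 \<in> {D \<in> \<B>. Suc n \<notin> D}" "B2 \<in> {D \<in> \<B>. Suc n \<notin> D}" "x \<in> B1 - B2"
  then obtain y where "y \<in> B2 - B1" "insert y (B1 - {x}) \<in> \<B>"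
    using matroid_bases_exchange[OF mb] by blast
  with B show "\<exists>y\<in>B2 - B1. insert y (B1 - {x}) \<in> {D \<in> \<B>. Suc n \<notin> D}" by auto
qed

lemma matroid_bases_containing:
  assumes mb: "matroid_bases (Suc n) \<B>" and ex: "\<exists>D\<in>\<B>. Suc n \<in> D"
  shows "matroid_bases n ((\<lambda>D. D - {Suc n}) ` {D\<in>\<B>. Suc n \<in> D})"
  unfolding matroid_bases_def
proof (intro conjI ballI)
  show "(\<lambda>D. D - {Suc n}) ` {D\<in>\<B>. Suc n \<in> D} \<noteq> {}" using ex by auto
next
  fix B assume "B \<in> (\<lambda>D. D - {Suc n}) ` {D\<in>\<B>. Suc n \<in> D}"
  then show "B \<subseteq> ground n" using matroid_bases_subset_ground[OF mb] by (fastforce simp: ground_Suc)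
next
  fix B1 B2 x assume B: "B1 \<in> (\<lambda>D. D - {Suc n}) ` {D\<in>\<B>. Suc n \<in> D}"
    "B2 \<in> (\<lambda>D. D - {Suc n}) ` {D\<in>\<B>. Suc n \<in> D}" "x \<in> B1 - B2"
  then obtain D1 D2 where D: "D1 \<in> \<B>" "Suc n \<in> D1" "B1 = D1 - {Suc n}"
    "D2 \<in> \<B>" "Suc n \<in> D2" "B2 = D2 - {Suc n}" by auto
  with B have "x \<in> D1 - D2" by auto
  then obtain y where y: "y \<in> D2 - D1" "insert y (D1 - {x}) \<in> \<B>"
    using matroid_bases_exchange[OF mb D(1) D(4)] by blast
  have "insert y (B1 - {x}) = insert y (D1 - {x}) - {Suc n}" and "Suc n \<in> insert y (D1 - {x})"
    using y D B by auto
  with y D show "\<exists>y\<in>B2 - B1. insert y (B1 - {x}) \<in> (\<lambda>D. D - {Suc n}) ` {D\<in>\<B>. Suc n \<in> D}"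
    by auto
qed

lemma matroid_bases_contract:
  assumes mb: "matroid_bases (Suc n) \<B>"
  shows "matroid_bases n (contract_bases (Suc n) \<B>)"
proof (cases "\<exists>D\<in>\<B>. Suc n \<in> D")
  case True
  then show ?thesis by (simp add: contract_bases_def matroid_bases_containing[OF mb])
next
  case False
  then have "\<B> = {D\<in>\<B>. Suc n \<notin> D}" "\<exists>D\<in>\<B>. Suc n \<notin> D"
    using mb by (auto simp: matroid_bases_def)
  then show ?thesis using False matroid_bases_avoiding[OF mb] by (simp add: contract_bases_def)
qed

lemma matroid_bases_delete:
  assumes mb: "matroid_bases (Suc n) \<B>"
  shows "matroid_bases n (delete_bases (Suc n) \<B>)"
proof (cases "\<exists>D\<in>\<B>. Suc n \<notin> D")
  case True
  then show ?thesis by (simp add: delete_bases_def matroid_bases_avoiding[OF mb])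
next
  case False
  then have "\<B> = {D\<in>\<B>. Suc n \<in> D}" "\<exists>D\<in>\<B>. Suc n \<in> D"
    using mb by (auto simp: matroid_bases_def)
  then show ?thesis using False matroid_bases_containing[OF mb] by (simp add: delete_bases_def)
qed

lemma contract_bases_below:
  assumes mb: "matroid_bases n \<B>" and D: "D \<in> \<B>"
  shows "\<exists>D'\<in>contract_bases k \<B>. D' \<subseteq> D"
proof (cases "\<exists>D0\<in>\<B>. k \<in> D0")
  case True
  then obtain D0 where D0: "D0 \<in> \<B>" "k \<in> D0" by blast
  show ?thesis
  proof (cases "k \<in> D")
    case True
    with D show ?thesis by (auto simp: contract_bases_def)
  next
    case False
    then obtain e where "e \<in> D" "insert k (D - {e}) \<in> \<B>"
      using matroid_bases_exchange_into[OF mb D0 D] by blast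
    moreover have "insert k (D - {e}) - {k} \<subseteq> D" by blast
    ultimately show ?thesis using D0 by (auto simp: contract_bases_def)
  qed
next
  case False
  with D show ?thesis by (auto simp: contract_bases_def)
qed

lemma delete_bases_above:
  assumes mb: "matroid_bases n \<B>" and D: "D \<in> \<B>"
  shows "\<exists>D'\<in>delete_bases k \<B>. D - {k} \<subseteq> D'"
proof (cases "\<exists>D0\<in>\<B>. k \<notin> D0")
  case True
  then obtain D0 where D0: "D0 \<in> \<B>" "k \<notin> D0" by blast
  show ?thesis
  proof (cases "k \<in> D")
    case True
    then obtain y where "y \<in> D0 - D" "insert y (D - {k}) \<in> \<B>"
      using matroid_bases_exchange[OF mb D D0(1)] D0 by blast
    with D0 show ?thesis by (auto simp: delete_bases_def)
  next
    case False
    with D show ?thesis by (auto simp: delete_bases_def)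
  qed
next
  case False
  with D show ?thesis by (auto simp: delete_bases_def)
qed

lemma card_contract_bases:
  assumes mb: "matroid_bases n \<B>" and D: "D \<in> \<B>" and D': "D' \<in> contract_bases k \<B>"
  shows "card D = card D' + of_bool (\<exists>D\<in>\<B>. k \<in> D)"
proof (cases "\<exists>D\<in>\<B>. k \<in> D")
  case True
  then obtain D0 where D0: "D0 \<in> \<B>" "k \<in> D0" "D' = D0 - {k}"
    using D' by (auto simp: contract_bases_def)
  then have "card D0 = Suc (card D')"
    using card_Suc_Diff1[OF matroid_bases_finite[OF mb D0(1)] D0(2)] by simp
  with True show ?thesis using matroid_bases_card_eq[OF mb D D0(1)] by simp
next
  case False
  with D' show ?thesis using matroid_bases_card_eq[OF mb D] by (simp add: contract_bases_def)
qed

lemma card_delete_bases: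
  assumes mb: "matroid_bases n \<B>" and D: "D \<in> \<B>" and D': "D' \<in> delete_bases k \<B>"
  shows "card D = card D' + of_bool (\<forall>D\<in>\<B>. k \<in> D)"
proof (cases "\<forall>D\<in>\<B>. k \<in> D")
  case True
  then obtain D0 where D0: "D0 \<in> \<B>" "k \<in> D0" "D' = D0 - {k}"
    using D' by (auto simp: delete_bases_def)
  then have "card D0 = Suc (card D')"
    using card_Suc_Diff1[OF matroid_bases_finite[OF mb D0(1)] D0(2)] by simp
  with True show ?thesis using matroid_bases_card_eq[OF mb D D0(1)] by simp
next
  case False
  with D' show ?thesis using matroid_bases_card_eq[OF mb D] by (auto simp: delete_bases_def)
qed

section \<open>Bases of maximal weight\<close>

definition unique_max_weight :: "nat set set \<Rightarrow> (nat \<Rightarrow> real) \<Rightarrow> nat set \<Rightarrow> bool" where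
  "unique_max_weight \<B> w B \<longleftrightarrow> B \<in> \<B> \<and> (\<forall>D\<in>\<B>. D \<noteq> B \<longrightarrow> sum w D < sum w B)"

lemma unique_max_weight_le: "unique_max_weight \<B> w B \<Longrightarrow> D \<in> \<B> \<Longrightarrow> sum w D \<le> sum w B"
  by (cases "D = B") (auto simp: unique_max_weight_def)

lemma unique_max_weight_cong:
  assumes "\<And>D. D \<in> \<B> \<Longrightarrow> sum w D = sum w' D"
  shows "unique_max_weight \<B> w B \<longleftrightarrow> unique_max_weight \<B> w' B"
  using assms by (auto simp: unique_max_weight_def)

lemma unique_max_weight_insert:
  assumes fin: "\<forall>D\<in>\<D>. k \<in> D \<and> finite D" and B': "unique_max_weight ((\<lambda>D. D - {k}) ` \<D>) w B'"
  shows "unique_max_weight \<D> w (insert k B')"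
proof -
  obtain D0 where D0: "D0 \<in> \<D>" "B' = D0 - {k}" using B' by (auto simp: unique_max_weight_def)
  with fin have B: "insert k B' = D0" by blast
  have sum_remove: "sum w D = w k + sum w (D - {k})" if "D \<in> \<D>" for D
    using fin that by (simp add: sum.remove)
  have "sum w D < sum w D0" if "D \<in> \<D>" "D \<noteq> D0" for D
  proof -
    have "D - {k} \<noteq> D0 - {k}" using that D0 fin by blast
    then have "sum w (D - {k}) < sum w B'" using B' that(1) D0(2) by (auto simp: unique_max_weight_def)
    then show ?thesis using sum_remove[OF that(1)] sum_remove[OF D0(1)] D0(2) by simp
  qed
  with B D0 show ?thesis by (simp add: unique_max_weight_def)
qed

lemma unique_max_weight_extend_heavy:
  assumes mb: "matroid_bases n \<B>" and heavy: "\<forall>j\<in>ground n - {k}. w j < w k"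
    and B: "unique_max_weight {D\<in>\<B>. k \<in> D} w B"
  shows "unique_max_weight \<B> w B"
proof -
  have Bk: "B \<in> \<B>" "k \<in> B" using B by (auto simp: unique_max_weight_def)
  have "sum w D < sum w B" if D: "D \<in> \<B>" "D \<noteq> B" for D
  proof (cases "k \<in> D")
    case True
    with B D show ?thesis by (auto simp: unique_max_weight_def)
  next
    case False
    \<comment> \<open>Exchanging k into D increases the weight.\<close>
    then obtain e where e: "e \<in> D" "insert k (D - {e}) \<in> \<B>"
      using matroid_bases_exchange_into[OF mb Bk D(1)] by blast
    have "e \<in> ground n - {k}" using e False matroid_bases_subset_ground[OF mb D(1)] by blast
    then have "sum w D < sum w (insert k (D - {e}))"
      using heavy e False matroid_bases_finite[OF mb D(1)] by (simp add: sum_diff1)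
    also have "\<dots> \<le> sum w B"
      using B e(2) by (auto intro: unique_max_weight_le)
    finally show ?thesis .
  qed
  with Bk show ?thesis by (simp add: unique_max_weight_def)
qed

lemma unique_max_weight_extend_light:
  assumes mb: "matroid_bases n \<B>" and light: "\<forall>j\<in>ground n - {k}. w k < w j"
    and B: "unique_max_weight {D\<in>\<B>. k \<notin> D} w B"
  shows "unique_max_weight \<B> w B"
proof -
  have Bk: "B \<in> \<B>" "k \<notin> B" using B by (auto simp: unique_max_weight_def)
  have "sum w D < sum w B" if D: "D \<in> \<B>" "D \<noteq> B" for D
  proof (cases "k \<in> D")
    case False
    with B D show ?thesis by (auto simp: unique_max_weight_def)
  next
    case True
    \<comment> \<open>Exchanging k out of D increases the weight.\<close>
    then obtain y where y: "y \<in> B - D" "insert y (D - {k}) \<in> \<B>"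
      using matroid_bases_exchange[OF mb D(1) Bk(1)] Bk(2) by blast
    have "y \<in> ground n - {k}" using y Bk matroid_bases_subset_ground[OF mb Bk(1)] by blast
    then have "sum w D < sum w (insert y (D - {k}))"
      using light y True matroid_bases_finite[OF mb D(1)] by (simp add: sum_diff1)
    also have "\<dots> \<le> sum w B"
      using B y Bk(2) by (auto intro: unique_max_weight_le)
    finally show ?thesis .
  qed
  with Bk show ?thesis by (simp add: unique_max_weight_def)
qed

lemma unique_max_weight_contract:
  assumes mb: "matroid_bases n \<B>" and heavy: "\<forall>j\<in>ground n - {k}. w j < w k"
    and B': "unique_max_weight (contract_bases k \<B>) w B'"
  shows "unique_max_weight \<B> w (if \<exists>D\<in>\<B>. k \<in> D then insert k B' else B')"
proof (cases "\<exists>D\<in>\<B>. k \<in> D")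
  case True
  have "\<forall>D\<in>{D\<in>\<B>. k \<in> D}. k \<in> D \<and> finite D" using matroid_bases_finite[OF mb] by blast
  then have "unique_max_weight {D\<in>\<B>. k \<in> D} w (insert k B')"
    using B' True by (intro unique_max_weight_insert) (auto simp: contract_bases_def)
  with True show ?thesis using unique_max_weight_extend_heavy[OF mb heavy] by simp
next
  case False
  with B' show ?thesis by (simp add: contract_bases_def)
qed

lemma unique_max_weight_delete:
  assumes mb: "matroid_bases n \<B>" and light: "\<forall>j\<in>ground n - {k}. w k < w j"
    and B': "unique_max_weight (delete_bases k \<B>) w B'"
  shows "unique_max_weight \<B> w (if \<forall>D\<in>\<B>. k \<in> D then insert k B' else B')"
proof (cases "\<forall>D\<in>\<B>. k \<in> D")
  case True
  have "\<forall>D\<in>\<B>. k \<in> D \<and> finite D" using True matroid_bases_finite[OF mb] by blast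
  with True B' show ?thesis by (simp add: delete_bases_def unique_max_weight_insert)
next
  case False
  then have "unique_max_weight {D\<in>\<B>. k \<notin> D} w B'" using B' by (simp add: delete_bases_def)
  then show ?thesis unfolding if_not_P[OF False] by (rule unique_max_weight_extend_light[OF mb light])
qed

section \<open>Convex hulls and the matroid polytope\<close>

definition dot :: "nat \<Rightarrow> vec \<Rightarrow> vec \<Rightarrow> real" where
  "dot n w p = (\<Sum>i\<in>ground n. w i * p i)"

lemma dot_indic:
  assumes "D \<subseteq> ground n"
  shows "dot n w (indic D) = sum w D"
proof -
  have "dot n w (indic D) = sum w {j\<in>ground n. j \<in> D}"
    unfolding dot_def indic_def sum.inter_filter[OF finite_ground] by (rule sum.cong) auto
  also have "{j\<in>ground n. j \<in> D} = D" using assms by blast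
  finally show ?thesis .
qed

lemma dot_combination: "dot n w (\<lambda>j. \<Sum>a\<in>I. c a * f a j) = (\<Sum>a\<in>I. c a * dot n w (f a))"
  unfolding dot_def by (simp add: sum_distrib_left algebra_simps sum.swap[of _ "ground n"])

lemma dot_linear:
  "dot n d (\<lambda>j. r * p j + q j - s * p' j) = r * dot n d p + dot n d q - s * dot n d p'"
  by (simp add: dot_def algebra_simps sum.distrib sum_subtractf sum_distrib_left)

lemma sum_image_regroup:
  fixes c :: "'a \<Rightarrow> real"
  assumes "finite I"
  shows "(\<Sum>i\<in>I. c i * g (f i)) = (\<Sum>v\<in>f ` I. sum c {i\<in>I. f i = v} * g v)"
proof -
  have "(\<Sum>i\<in>I. c i * g (f i)) = (\<Sum>v\<in>f ` I. \<Sum>i\<in>{i\<in>I. f i = v}. c i * g (f i))"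
    by (rule sum.image_gen[OF assms])
  also have "\<dots> = (\<Sum>v\<in>f ` I. sum c {i\<in>I. f i = v} * g v)"
  proof (rule sum.cong[OF refl])
    fix v
    have "(\<Sum>i\<in>{i\<in>I. f i = v}. c i * g (f i)) = (\<Sum>i\<in>{i\<in>I. f i = v}. c i * g v)"
      by (rule sum.cong) auto
    then show "(\<Sum>i\<in>{i\<in>I. f i = v}. c i * g (f i)) = sum c {i\<in>I. f i = v} * g v"
      by (simp add: sum_distrib_right[symmetric])
  qed
  finally show ?thesis .
qed

lemma conv_combination_mem:
  assumes "finite I" "\<forall>i\<in>I. 0 \<le> c i" "sum c I = 1" "f ` I \<subseteq> A"
  shows "(\<lambda>j. \<Sum>i\<in>I. c i * f i j) \<in> conv A"
proof -
  define c' where "c' v = sum c {i\<in>I. f i = v}" for v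
  have "sum c' (f ` I) = 1"
    using sum.image_gen[OF assms(1), of c f] assms(3) by (simp add: c'_def)
  moreover have "f ` I \<noteq> {}" using assms(3) by force
  moreover have "\<forall>v\<in>f ` I. 0 \<le> c' v" using assms(2) by (auto simp: c'_def intro!: sum_nonneg)
  moreover have "(\<Sum>i\<in>I. c i * f i j) = (\<Sum>v\<in>f ` I. c' v * v j)" for j
    using sum_image_regroup[OF assms(1), of c "\<lambda>v. v j" f] by (simp add: c'_def)
  ultimately show ?thesis
    using assms(1,4) unfolding conv_def by (intro CollectI exI[of _ "f ` I"] exI[of _ c']) auto
qed

lemma lconv_combination_mem:
  assumes "finite I" "\<forall>i\<in>I. 0 \<le> c i" "sum c I = 1" "f ` I \<subseteq> A"
  shows "((\<lambda>j. \<Sum>i\<in>I. c i * fst (f i) j), \<Sum>i\<in>I. c i * snd (f i)) \<in> lconv A"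
proof -
  define c' where "c' v = sum c {i\<in>I. f i = v}" for v
  have "sum c' (f ` I) = 1"
    using sum.image_gen[OF assms(1), of c f] assms(3) by (simp add: c'_def)
  moreover have "f ` I \<noteq> {}" using assms(3) by force
  moreover have "\<forall>v\<in>f ` I. 0 \<le> c' v" using assms(2) by (auto simp: c'_def intro!: sum_nonneg)
  moreover have "(\<Sum>i\<in>I. c i * fst (f i) j) = (\<Sum>v\<in>f ` I. c' v * fst v j)" for j
    using sum_image_regroup[OF assms(1), of c "\<lambda>v. fst v j" f] by (simp add: c'_def)
  moreover have "(\<Sum>i\<in>I. c i * snd (f i)) = (\<Sum>v\<in>f ` I. c' v * snd v)"
    using sum_image_regroup[OF assms(1), of c snd f] by (simp add: c'_def)
  ultimately show ?thesis
    using assms(1,4) unfolding lconv_def by (intro CollectI exI[of _ "f ` I"] exI[of _ c']) auto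
qed

lemma inj_indic: "inj indic"
proof (rule injI)
  fix A B assume eq: "indic A = indic B"
  show "A = B"
  proof (rule set_eqI)
    fix x show "x \<in> A \<longleftrightarrow> x \<in> B" using fun_cong[OF eq, of x] by (auto simp: indic_def split: if_splits)
  qed
qed

lemma matroid_polytope_obtain:
  assumes "p \<in> matroid_polytope \<B>"
  obtains I c where "finite I" "I \<subseteq> \<B>" "\<forall>D\<in>I. 0 \<le> c D" "sum c I = 1"
    "p = (\<lambda>j. \<Sum>D\<in>I. c D * indic D j)"
proof -
  obtain S c where S: "finite S" "S \<subseteq> indic ` \<B>" "\<forall>a\<in>S. 0 \<le> c a" "sum c S = 1"
    "p = (\<lambda>j. \<Sum>a\<in>S. c a * a j)"
    using assms unfolding matroid_polytope_def conv_def by blast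
  define I where "I = {D\<in>\<B>. indic D \<in> S}"
  have inj: "inj_on indic I" using inj_indic by (simp add: inj_on_def inj_def)
  have S_eq: "S = indic ` I" using S(2) by (auto simp: I_def)
  have "finite I" using S(1) S_eq inj finite_imageD by blast
  moreover have "sum (c \<circ> indic) I = 1" "p = (\<lambda>j. \<Sum>D\<in>I. (c \<circ> indic) D * indic D j)"
    using S(4,5) unfolding S_eq by (simp_all add: sum.reindex[OF inj])
  moreover have "\<forall>D\<in>I. 0 \<le> (c \<circ> indic) D" using S(3) S_eq by auto
  ultimately show ?thesis using that[of I "c \<circ> indic"] by (auto simp: I_def)
qed

lemma matroid_polytope_combination:
  assumes "finite I" "\<forall>i\<in>I. 0 \<le> c i" "sum c I = 1" "\<phi> ` I \<subseteq> \<B>"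
  shows "(\<lambda>j. \<Sum>i\<in>I. c i * indic (\<phi> i) j) \<in> matroid_polytope \<B>"
proof -
  have "(indic \<circ> \<phi>) ` I \<subseteq> indic ` \<B>" using assms(4) by auto
  from conv_combination_mem[OF assms(1-3) this] show ?thesis
    unfolding matroid_polytope_def by simp
qed

lemma indic_mem_matroid_polytope: "B \<in> \<B> \<Longrightarrow> indic B \<in> matroid_polytope \<B>"
  using matroid_polytope_combination[of "{B}" "\<lambda>_. 1" id \<B>] by simp

lemma dot_indic_combination:
  assumes "\<forall>D\<in>I. D \<subseteq> ground n"
  shows "dot n w (\<lambda>j. \<Sum>D\<in>I. c D * indic D j) = (\<Sum>D\<in>I. c D * sum w D)"
  unfolding dot_combination using assms by (intro sum.cong) (auto simp: dot_indic)

lemma sum_matroid_polytope: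
  assumes mb: "matroid_bases n \<B>" and B: "B \<in> \<B>" and p: "p \<in> matroid_polytope \<B>"
  shows "(\<Sum>j\<in>ground n. p j) = card B"
proof -
  obtain I c where I: "finite I" "I \<subseteq> \<B>" "\<forall>D\<in>I. 0 \<le> c D" "sum c I = 1"
    "p = (\<lambda>j. \<Sum>D\<in>I. c D * indic D j)"
    using matroid_polytope_obtain[OF p] .
  have "dot n (\<lambda>_. 1) p = (\<Sum>D\<in>I. c D * sum (\<lambda>_. 1) D)"
    unfolding I(5) using I(2) matroid_bases_subset_ground[OF mb] by (intro dot_indic_combination) blast
  then have "(\<Sum>j\<in>ground n. p j) = (\<Sum>D\<in>I. c D * card D)"
    by (simp add: dot_def)
  also have "\<dots> = (\<Sum>D\<in>I. c D * card B)"
    using I(2) matroid_bases_card_eq[OF mb _ B] by (intro sum.cong) auto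
  finally show ?thesis using I(4) by (simp add: sum_distrib_right[symmetric])
qed

lemma dot_matroid_polytope_le:
  assumes mb: "matroid_bases n \<B>" and B: "unique_max_weight \<B> w B" and p: "p \<in> matroid_polytope \<B>"
  shows "dot n w p \<le> sum w B"
proof -
  obtain I c where I: "finite I" "I \<subseteq> \<B>" "\<forall>D\<in>I. 0 \<le> c D" "sum c I = 1"
    "p = (\<lambda>j. \<Sum>D\<in>I. c D * indic D j)"
    using matroid_polytope_obtain[OF p] .
  have dot_p: "dot n w p = (\<Sum>D\<in>I. c D * sum w D)"
    unfolding I(5) using I(2) matroid_bases_subset_ground[OF mb] by (intro dot_indic_combination) blast
  have "(\<Sum>D\<in>I. c D * sum w D) \<le> (\<Sum>D\<in>I. c D * sum w B)"
    using I(2,3) unique_max_weight_le[OF B] by (intro sum_mono mult_left_mono) auto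
  with I(4) dot_p show ?thesis by (simp add: sum_distrib_right[symmetric])
qed

lemma dot_matroid_polytope_eq:
  assumes mb: "matroid_bases n \<B>" and B: "unique_max_weight \<B> w B" and p: "p \<in> matroid_polytope \<B>"
    and ge: "sum w B \<le> dot n w p"
  shows "p = indic B"
proof -
  obtain I c where I: "finite I" "I \<subseteq> \<B>" "\<forall>D\<in>I. 0 \<le> c D" "sum c I = 1"
    "p = (\<lambda>j. \<Sum>D\<in>I. c D * indic D j)"
    using matroid_polytope_obtain[OF p] .
  have dot_p: "dot n w p = (\<Sum>D\<in>I. c D * sum w D)"
    unfolding I(5) using I(2) matroid_bases_subset_ground[OF mb] by (intro dot_indic_combination) blast
  have "(\<Sum>D\<in>I. c D * (sum w B - sum w D)) = sum w B - dot n w p"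
    using I(4) dot_p by (simp add: right_diff_distrib sum_subtractf sum_distrib_right[symmetric])
  moreover have nonneg: "\<forall>D\<in>I. 0 \<le> c D * (sum w B - sum w D)"
  proof
    fix D assume "D \<in> I"
    then have "sum w D \<le> sum w B" "0 \<le> c D"
      using I(2,3) unique_max_weight_le[OF B] by auto
    then show "0 \<le> c D * (sum w B - sum w D)" by simp
  qed
  moreover from nonneg have "0 \<le> (\<Sum>D\<in>I. c D * (sum w B - sum w D))"
    by (simp add: sum_nonneg)
  ultimately have "(\<Sum>D\<in>I. c D * (sum w B - sum w D)) = 0" using ge by linarith
  then have zero: "\<forall>D\<in>I. c D * (sum w B - sum w D) = 0"
    using sum_nonneg_eq_0_iff[OF I(1), of "\<lambda>D. c D * (sum w B - sum w D)"] nonneg by simp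
  have "c D * indic D j = c D * indic B j" if D: "D \<in> I" for D j
  proof (cases "D = B")
    case False
    then have "sum w D < sum w B" using B D I(2) by (auto simp: unique_max_weight_def)
    with zero D show ?thesis by fastforce
  qed simp
  then have "p = (\<lambda>j. \<Sum>D\<in>I. c D * indic B j)"
    unfolding I(5) by (intro ext sum.cong) simp_all
  with I(4) show ?thesis by (simp add: sum_distrib_right[symmetric])
qed

lemma matroid_polytope_contract:
  assumes mb: "matroid_bases (Suc n) \<B>" and p: "p \<in> matroid_polytope \<B>"
  obtains p' where "p' \<in> matroid_polytope (contract_bases (Suc n) \<B>)" "\<forall>j. p' j \<le> p j"
    "(\<Sum>j\<in>ground n. p' j) = (\<Sum>j\<in>ground (Suc n). p j) - of_bool (\<exists>D\<in>\<B>. Suc n \<in> D)"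
proof -
  let ?\<B>' = "contract_bases (Suc n) \<B>"
  have "\<forall>D\<in>\<B>. \<exists>D'\<in>?\<B>'. D' \<subseteq> D" using contract_bases_below[OF mb] by blast
  then obtain \<phi> where \<phi>: "\<forall>D\<in>\<B>. \<phi> D \<in> ?\<B>' \<and> \<phi> D \<subseteq> D" by metis
  obtain I c where I: "finite I" "I \<subseteq> \<B>" "\<forall>D\<in>I. 0 \<le> c D" "sum c I = 1"
    "p = (\<lambda>j. \<Sum>D\<in>I. c D * indic D j)"
    using matroid_polytope_obtain[OF p] .
  define p' where "p' = (\<lambda>j. \<Sum>D\<in>I. c D * indic (\<phi> D) j)"
  have p': "p' \<in> matroid_polytope ?\<B>'"
    unfolding p'_def using I \<phi> by (intro matroid_polytope_combination) auto
  have "indic (\<phi> D) j \<le> indic D j" if "D \<in> I" for D j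
    using I(2) \<phi> that by (auto simp: indic_def)
  then have "\<forall>j. p' j \<le> p j"
    unfolding p'_def I(5) using I(3) by (auto intro!: sum_mono mult_left_mono)
  moreover obtain B where B: "B \<in> \<B>" using mb by (auto simp: matroid_bases_def)
  then have "\<phi> B \<in> ?\<B>'" using \<phi> by blast
  then have "(\<Sum>j\<in>ground n. p' j) = card (\<phi> B)"
    by (rule sum_matroid_polytope[OF matroid_bases_contract[OF mb] _ p'])
  moreover have "card B = card (\<phi> B) + of_bool (\<exists>D\<in>\<B>. Suc n \<in> D)"
    using card_contract_bases[OF mb B \<open>\<phi> B \<in> ?\<B>'\<close>] .
  ultimately show ?thesis using sum_matroid_polytope[OF mb B p] that[OF p'] by simp
qed

lemma matroid_polytope_delete:
  assumes mb: "matroid_bases (Suc n) \<B>" and p: "p \<in> matroid_polytope \<B>"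
  obtains p' where "p' \<in> matroid_polytope (delete_bases (Suc n) \<B>)" "\<forall>j\<in>ground n. p j \<le> p' j"
    "(\<Sum>j\<in>ground n. p' j) = (\<Sum>j\<in>ground (Suc n). p j) - of_bool (\<forall>D\<in>\<B>. Suc n \<in> D)"
proof -
  let ?\<B>' = "delete_bases (Suc n) \<B>"
  have "\<forall>D\<in>\<B>. \<exists>D'\<in>?\<B>'. D - {Suc n} \<subseteq> D'" using delete_bases_above[OF mb] by blast
  then obtain \<phi> where \<phi>: "\<forall>D\<in>\<B>. \<phi> D \<in> ?\<B>' \<and> D - {Suc n} \<subseteq> \<phi> D" by metis
  obtain I c where I: "finite I" "I \<subseteq> \<B>" "\<forall>D\<in>I. 0 \<le> c D" "sum c I = 1"
    "p = (\<lambda>j. \<Sum>D\<in>I. c D * indic D j)"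
    using matroid_polytope_obtain[OF p] .
  define p' where "p' = (\<lambda>j. \<Sum>D\<in>I. c D * indic (\<phi> D) j)"
  have p': "p' \<in> matroid_polytope ?\<B>'"
    unfolding p'_def using I \<phi> by (intro matroid_polytope_combination) auto
  have "indic D j \<le> indic (\<phi> D) j" if "D \<in> I" "j \<in> ground n" for D j
  proof -
    have "D - {Suc n} \<subseteq> \<phi> D" using I(2) \<phi> that(1) by blast
    with that(2) show ?thesis by (auto simp: indic_def ground_def)
  qed
  then have "\<forall>j\<in>ground n. p j \<le> p' j"
    unfolding p'_def I(5) using I(3) by (auto intro!: sum_mono mult_left_mono)
  moreover obtain B where B: "B \<in> \<B>" using mb by (auto simp: matroid_bases_def)
  then have "\<phi> B \<in> ?\<B>'" using \<phi> by blast
  then have "(\<Sum>j\<in>ground n. p' j) = card (\<phi> B)"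
    by (rule sum_matroid_polytope[OF matroid_bases_delete[OF mb] _ p'])
  moreover have "card B = card (\<phi> B) + of_bool (\<forall>D\<in>\<B>. Suc n \<in> D)"
    using card_delete_bases[OF mb B \<open>\<phi> B \<in> ?\<B>'\<close>] .
  ultimately show ?thesis using sum_matroid_polytope[OF mb B p] that[OF p'] by simp
qed

section \<open>Choosing the vertex\<close>

text \<open>For n \<ge> 1 this says d \<in> U\<Delta> + V\<nabla>, see in_Delta_Nabla_decompose.\<close>
definition in_Delta_Nabla :: "nat \<Rightarrow> real \<Rightarrow> real \<Rightarrow> vec \<Rightarrow> bool" where
  "in_Delta_Nabla n U V d \<longleftrightarrow> (\<Sum>i\<in>ground n. max (d i) 0) \<le> U \<and>
     (\<Sum>i\<in>ground n. max (- d i) 0) \<le> V \<and> (\<Sum>i\<in>ground n. d i) = U - V"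

lemma in_Delta_Nabla_cong:
  "(\<And>i. i \<in> ground n \<Longrightarrow> d i = d' i) \<Longrightarrow> in_Delta_Nabla n U V d \<longleftrightarrow> in_Delta_Nabla n U V d'"
  unfolding in_Delta_Nabla_def by (simp cong: sum.cong)

lemma in_Delta_Nabla_uminus: "in_Delta_Nabla n V U (\<lambda>i. - d i) \<longleftrightarrow> in_Delta_Nabla n U V d"
  by (auto simp: in_Delta_Nabla_def sum_negf)

lemma in_Delta_Nabla_Suc:
  assumes "in_Delta_Nabla n U V d"
  shows "in_Delta_Nabla (Suc n) (U + max (d (Suc n)) 0) (V + max (- d (Suc n)) 0) d"
  using assms by (auto simp: in_Delta_Nabla_def ground_Suc max_def)

lemma in_Delta_Nabla_reduce_pos:
  assumes d: "in_Delta_Nabla (Suc n) U V d" and le: "\<forall>j\<in>ground n. d j \<le> d' j" and "0 \<le> c"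
    and sum_eq: "(\<Sum>j\<in>ground n. d' j) = (\<Sum>j\<in>ground (Suc n). d j) - c"
  shows "in_Delta_Nabla n (U - c) V d'"
proof -
  have "(\<Sum>j\<in>ground n. max (d' j) 0) \<le> (\<Sum>j\<in>ground n. max (d j) 0 + (d' j - d j))"
    using le by (intro sum_mono) auto
  also have "\<dots> = (\<Sum>j\<in>ground n. max (d j) 0) + d (Suc n) - c"
    using sum_eq by (simp add: sum.distrib sum_subtractf ground_Suc)
  finally have pos: "(\<Sum>j\<in>ground n. max (d' j) 0) \<le> (\<Sum>j\<in>ground n. max (d j) 0) + d (Suc n) - c" .
  have neg: "(\<Sum>j\<in>ground n. max (- d' j) 0) \<le> (\<Sum>j\<in>ground n. max (- d j) 0)"
    using le by (intro sum_mono) auto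
  have U: "max (d (Suc n)) 0 + (\<Sum>j\<in>ground n. max (d j) 0) \<le> U"
    and V: "max (- d (Suc n)) 0 + (\<Sum>j\<in>ground n. max (- d j) 0) \<le> V"
    and UV: "d (Suc n) + (\<Sum>j\<in>ground n. d j) = U - V"
    using d by (simp_all add: in_Delta_Nabla_def ground_Suc)
  have "(\<Sum>j\<in>ground n. d' j) = d (Suc n) + (\<Sum>j\<in>ground n. d j) - c"
    using sum_eq by (simp add: ground_Suc)
  then have "(\<Sum>j\<in>ground n. d' j) = U - c - V" using UV by linarith
  moreover have "d (Suc n) \<le> max (d (Suc n)) 0" by simp
  then have "(\<Sum>j\<in>ground n. max (d' j) 0) \<le> U - c" using pos U by linarith
  moreover have "0 \<le> max (- d (Suc n)) 0" by simp
  then have "(\<Sum>j\<in>ground n. max (- d' j) 0) \<le> V" using neg V by linarith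
  ultimately show ?thesis by (simp add: in_Delta_Nabla_def)
qed

lemma in_Delta_Nabla_reduce_neg:
  assumes "in_Delta_Nabla (Suc n) U V d" "\<forall>j\<in>ground n. d' j \<le> d j" "0 \<le> c"
    "(\<Sum>j\<in>ground n. d' j) = (\<Sum>j\<in>ground (Suc n). d j) + c"
  shows "in_Delta_Nabla n U (V - c) d'"
  using in_Delta_Nabla_reduce_pos[of n V U "\<lambda>i. - d i" "\<lambda>i. - d' i" c] assms
  by (simp add: in_Delta_Nabla_uminus sum_negf)

text \<open>The common slack of the two inequalities is put on the coordinate 1.\<close>
lemma in_Delta_Nabla_decompose:
  assumes d: "in_Delta_Nabla n U V d" and one: "1 \<in> ground n" and "0 < U" "0 < V"
  obtains a b where "\<forall>j. 0 \<le> a j" "\<forall>j. a j \<noteq> 0 \<longrightarrow> j \<in> ground n \<and> (j = 1 \<or> 0 < d j)"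
    "sum a (ground n) = 1" "\<forall>j. 0 \<le> b j" "\<forall>j. b j \<noteq> 0 \<longrightarrow> j \<in> ground n \<and> (j = 1 \<or> d j < 0)"
    "sum b (ground n) = 1" "\<forall>j\<in>ground n. d j = U * a j - V * b j"
proof -
  define s where "s = U - (\<Sum>j\<in>ground n. max (d j) 0)"
  have "(\<Sum>j\<in>ground n. d j) = (\<Sum>j\<in>ground n. max (d j) 0) - (\<Sum>j\<in>ground n. max (- d j) 0)"
    unfolding sum_subtractf[symmetric] by (rule sum.cong) (auto simp: max_def)
  then have s: "0 \<le> s" "s = V - (\<Sum>j\<in>ground n. max (- d j) 0)"
    using d unfolding in_Delta_Nabla_def s_def by auto
  define a where "a j = (if j \<in> ground n then (max (d j) 0 + (if j = 1 then s else 0)) / U else 0)" for j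
  define b where "b j = (if j \<in> ground n then (max (- d j) 0 + (if j = 1 then s else 0)) / V else 0)" for j
  have sum_slack: "(\<Sum>j\<in>ground n. (f j + (if j = 1 then s else 0)) / r) = ((\<Sum>j\<in>ground n. f j) + s) / r"
    for f r
    using one by (simp add: sum_divide_distrib[symmetric] sum.distrib)
  have "sum a (ground n) = ((\<Sum>j\<in>ground n. max (d j) 0) + s) / U"
    using sum_slack[of "\<lambda>j. max (d j) 0" U] by (simp add: a_def)
  then have "sum a (ground n) = 1" using \<open>0 < U\<close> by (simp add: s_def)
  moreover have "sum b (ground n) = ((\<Sum>j\<in>ground n. max (- d j) 0) + s) / V"
    using sum_slack[of "\<lambda>j. max (- d j) 0" V] by (simp add: b_def)
  then have "sum b (ground n) = 1" using \<open>0 < V\<close> s(2) by simp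
  moreover have "\<forall>j. 0 \<le> a j" "\<forall>j. a j \<noteq> 0 \<longrightarrow> j \<in> ground n \<and> (j = 1 \<or> 0 < d j)"
    using s(1) \<open>0 < U\<close> by (auto simp: a_def max_def)
  moreover have "\<forall>j. 0 \<le> b j" "\<forall>j. b j \<noteq> 0 \<longrightarrow> j \<in> ground n \<and> (j = 1 \<or> d j < 0)"
    using s(1) \<open>0 < V\<close> by (auto simp: b_def max_def)
  moreover have "\<forall>j\<in>ground n. d j = U * a j - V * b j"
    using \<open>0 < U\<close> \<open>0 < V\<close> by (auto simp: a_def b_def max_def)
  ultimately show ?thesis using that by blast
qed

lemma in_Delta_Nabla_contract:
  assumes mb: "matroid_bases (Suc n) \<B>" and p: "p \<in> matroid_polytope \<B>"
    and d: "in_Delta_Nabla (Suc n) U V (\<lambda>i. x i - p i)" and x: "1 \<le> x (Suc n)"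
  shows "\<exists>p'\<in>matroid_polytope (contract_bases (Suc n) \<B>).
    in_Delta_Nabla n (U - (x (Suc n) - of_bool (\<exists>D\<in>\<B>. Suc n \<in> D))) V (\<lambda>i. x i - p' i)"
proof -
  let ?\<delta> = "of_bool (\<exists>D\<in>\<B>. Suc n \<in> D) :: real"
  obtain p' where p': "p' \<in> matroid_polytope (contract_bases (Suc n) \<B>)" "\<forall>j. p' j \<le> p j"
    "(\<Sum>j\<in>ground n. p' j) = (\<Sum>j\<in>ground (Suc n). p j) - ?\<delta>"
    using matroid_polytope_contract[OF mb p] .
  have "in_Delta_Nabla n (U - (x (Suc n) - ?\<delta>)) V (\<lambda>i. x i - p' i)"
  proof (rule in_Delta_Nabla_reduce_pos[OF d])
    show "\<forall>j\<in>ground n. x j - p j \<le> x j - p' j" using p'(2) by simp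
    show "0 \<le> x (Suc n) - ?\<delta>" using x by simp
    show "(\<Sum>j\<in>ground n. x j - p' j) = (\<Sum>j\<in>ground (Suc n). x j - p j) - (x (Suc n) - ?\<delta>)"
      using p'(3) by (simp add: sum_subtractf ground_Suc)
  qed
  with p'(1) show ?thesis by blast
qed

lemma in_Delta_Nabla_delete:
  assumes mb: "matroid_bases (Suc n) \<B>" and p: "p \<in> matroid_polytope \<B>"
    and d: "in_Delta_Nabla (Suc n) U V (\<lambda>i. x i - p i)" and x: "x (Suc n) \<le> 0"
  shows "\<exists>p'\<in>matroid_polytope (delete_bases (Suc n) \<B>).
    in_Delta_Nabla n U (V - (of_bool (\<forall>D\<in>\<B>. Suc n \<in> D) - x (Suc n))) (\<lambda>i. x i - p' i)"
proof -
  let ?\<delta> = "of_bool (\<forall>D\<in>\<B>. Suc n \<in> D) :: real"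
  obtain p' where p': "p' \<in> matroid_polytope (delete_bases (Suc n) \<B>)" "\<forall>j\<in>ground n. p j \<le> p' j"
    "(\<Sum>j\<in>ground n. p' j) = (\<Sum>j\<in>ground (Suc n). p j) - ?\<delta>"
    using matroid_polytope_delete[OF mb p] .
  have "in_Delta_Nabla n U (V - (?\<delta> - x (Suc n))) (\<lambda>i. x i - p' i)"
  proof (rule in_Delta_Nabla_reduce_neg[OF d])
    show "\<forall>j\<in>ground n. x j - p' j \<le> x j - p j" using p'(2) by simp
    show "0 \<le> ?\<delta> - x (Suc n)" using x by simp
    show "(\<Sum>j\<in>ground n. x j - p' j) = (\<Sum>j\<in>ground (Suc n). x j - p j) + (?\<delta> - x (Suc n))"
      using p'(3) by (simp add: sum_subtractf ground_Suc)
  qed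
  with p'(1) show ?thesis by blast
qed

lemma Ints_le_0_or_ge_1: "x \<in> \<int> \<Longrightarrow> x \<le> 0 \<or> 1 \<le> (x :: real)"
  by (elim Ints_cases) (metis int_one_le_iff_zero_less not_less of_int_le_0_iff of_int_1_le_iff)

definition sign_split :: "nat \<Rightarrow> vec \<Rightarrow> real \<Rightarrow> real \<Rightarrow> nat set \<Rightarrow> nat set \<Rightarrow> bool" where
  "sign_split n x U V S B \<longleftrightarrow> S \<subseteq> ground n \<and> in_Delta_Nabla n U V (\<lambda>i. x i - indic B i) \<and>
     (\<forall>i\<in>S. indic B i \<le> x i) \<and> (\<forall>i\<in>ground n - S. x i \<le> indic B i)"

lemma sign_split_diff_Suc:
  assumes split: "sign_split n x U V S (B - {Suc n})"
  shows "sign_split n x U V S B"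
proof -
  have agree: "indic (B - {Suc n}) i = indic B i" if "i \<in> ground n" for i
    using that by (auto simp: indic_def)
  have S: "S \<subseteq> ground n" using split by (simp add: sign_split_def)
  have "\<forall>i\<in>S. indic B i \<le> x i"
  proof
    fix i assume i: "i \<in> S"
    then have "indic (B - {Suc n}) i \<le> x i" using split by (simp add: sign_split_def)
    moreover have "i \<in> ground n" using i S by blast
    ultimately show "indic B i \<le> x i" using agree by simp
  qed
  moreover have "\<forall>i\<in>ground n - S. x i \<le> indic B i"
    using split agree by (simp add: sign_split_def)
  moreover have "in_Delta_Nabla n U V (\<lambda>i. x i - indic B i)"
    using split in_Delta_Nabla_cong[where d="\<lambda>i. x i - indic B i" and d'="\<lambda>i. x i - indic (B - {Suc n}) i"]
    by (simp add: sign_split_def agree)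
  ultimately show ?thesis using S by (simp add: sign_split_def)
qed

lemma sign_split_Suc_pos:
  assumes split: "sign_split n x (U - (x (Suc n) - indic B (Suc n))) V S B"
    and Bx: "indic B (Suc n) \<le> x (Suc n)"
  shows "sign_split (Suc n) x U V (insert (Suc n) S) B"
proof -
  have S: "S \<subseteq> ground n" and pos: "\<forall>i\<in>S. indic B i \<le> x i"
    and neg: "\<forall>i\<in>ground n - S. x i \<le> indic B i"
    and "in_Delta_Nabla n (U - (x (Suc n) - indic B (Suc n))) V (\<lambda>i. x i - indic B i)"
    using split by (simp_all add: sign_split_def)
  from in_Delta_Nabla_Suc[OF this(4)] have "in_Delta_Nabla (Suc n) U V (\<lambda>i. x i - indic B i)"
    using Bx by simp
  moreover have "ground (Suc n) - insert (Suc n) S = ground n - S" by (auto simp: ground_Suc)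
  ultimately show ?thesis
    using S pos neg Bx unfolding sign_split_def by (simp add: ground_Suc insert_mono subset_insertI2)
qed

lemma sign_split_Suc_neg:
  assumes split: "sign_split n x U (V - (indic B (Suc n) - x (Suc n))) S B"
    and Bx: "x (Suc n) \<le> indic B (Suc n)"
  shows "sign_split (Suc n) x U V S B"
proof -
  have S: "S \<subseteq> ground n" and pos: "\<forall>i\<in>S. indic B i \<le> x i"
    and neg: "\<forall>i\<in>ground n - S. x i \<le> indic B i"
    and "in_Delta_Nabla n U (V - (indic B (Suc n) - x (Suc n))) (\<lambda>i. x i - indic B i)"
    using split by (simp_all add: sign_split_def)
  from in_Delta_Nabla_Suc[OF this(4)] have "in_Delta_Nabla (Suc n) U V (\<lambda>i. x i - indic B i)"
    using Bx by simp
  moreover have "ground (Suc n) - S = insert (Suc n) (ground n - S)" using S by (auto simp: ground_Suc)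
  ultimately show ?thesis
    using S pos neg Bx unfolding sign_split_def by (auto simp: ground_Suc)
qed

locale increasing_heights =
  fixes \<alpha> \<beta> :: "nat \<Rightarrow> real" and u t :: real and N :: nat
  assumes u_pos: "0 < u" and t_pos: "0 < t"
    and \<alpha>_less: "\<And>i j. 1 \<le> i \<Longrightarrow> i < j \<Longrightarrow> j \<le> N \<Longrightarrow> \<alpha> i < \<alpha> j"
    and \<beta>_less: "\<And>i j. 1 \<le> i \<Longrightarrow> i < j \<Longrightarrow> j \<le> N \<Longrightarrow> \<beta> i < \<beta> j"
begin

lemma \<alpha>_le: "1 \<le> i \<Longrightarrow> i \<le> j \<Longrightarrow> j \<le> N \<Longrightarrow> \<alpha> i \<le> \<alpha> j"
  using \<alpha>_less by (cases "i = j") (auto intro: less_imp_le)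

lemma \<beta>_le: "1 \<le> i \<Longrightarrow> i \<le> j \<Longrightarrow> j \<le> N \<Longrightarrow> \<beta> i \<le> \<beta> j"
  using \<beta>_less by (cases "i = j") (auto intro: less_imp_le)

text \<open>With this weight, u w_i - \<alpha>_i vanishes exactly on S \<union> {1} and -t w_i - \<beta>_i attains its
  maximum exactly off S and at 1, so that the face of the lifted u\<Delta> is spanned by S \<union> {1} and
  that of the lifted t\<nabla> by the complement of S together with 1.\<close>
definition weight :: "nat set \<Rightarrow> vec" where
  "weight S i = (if i \<in> S then \<alpha> i / u else \<alpha> 1 / u + \<beta> 1 / t - \<beta> i / t)"

lemma weight_less_Suc:
  assumes "Suc n \<in> S" "Suc n \<le> N" "j \<in> ground n"
  shows "weight S j < weight S (Suc n)"
proof -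
  have j: "1 \<le> j" "j < Suc n" using assms(3) by (auto simp: ground_def)
  have "\<alpha> j / u < \<alpha> (Suc n) / u" "\<alpha> 1 / u < \<alpha> (Suc n) / u"
    using \<alpha>_less[OF j assms(2)] \<alpha>_less[of 1 "Suc n"] j assms(2) u_pos by (auto simp: divide_strict_right_mono)
  moreover have "\<beta> 1 / t \<le> \<beta> j / t" using \<beta>_le[of 1 j] j assms(2) t_pos by (simp add: divide_right_mono)
  ultimately show ?thesis using assms(1) by (auto simp: weight_def)
qed

lemma weight_Suc_less:
  assumes "Suc n \<notin> S" "Suc n \<le> N" "j \<in> ground n"
  shows "weight S (Suc n) < weight S j"
proof -
  have j: "1 \<le> j" "j < Suc n" using assms(3) by (auto simp: ground_def)
  have "\<alpha> 1 / u \<le> \<alpha> j / u" using \<alpha>_le[of 1 j] j assms(2) u_pos by (simp add: divide_right_mono)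
  moreover have "\<beta> 1 / t < \<beta> (Suc n) / t" "\<beta> j / t < \<beta> (Suc n) / t"
    using \<beta>_less[OF j assms(2)] \<beta>_less[of 1 "Suc n"] j assms(2) t_pos by (auto simp: divide_strict_right_mono)
  ultimately show ?thesis using assms(1) by (auto simp: weight_def)
qed

lemma unique_max_weight_insert_Suc:
  assumes "matroid_bases n \<B>"
  shows "unique_max_weight \<B> (weight (insert (Suc n) S)) B \<longleftrightarrow> unique_max_weight \<B> (weight S) B"
proof (rule unique_max_weight_cong, rule sum.cong[OF refl])
  fix D i assume "D \<in> \<B>" "i \<in> D"
  then have "i \<noteq> Suc n" using matroid_bases_subset_ground[OF assms] by fastforce
  then show "weight (insert (Suc n) S) i = weight S i" by (simp add: weight_def)
qed

lemma sign_split_contract: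
  assumes N: "Suc n \<le> N" and mb: "matroid_bases (Suc n) \<B>" and x: "1 \<le> x (Suc n)"
    and split: "sign_split n x (U - (x (Suc n) - of_bool (\<exists>D\<in>\<B>. Suc n \<in> D))) V S B'"
    and max: "unique_max_weight (contract_bases (Suc n) \<B>) (weight S) B'"
  shows "\<exists>B. sign_split (Suc n) x U V (insert (Suc n) S) B \<and>
    unique_max_weight \<B> (weight (insert (Suc n) S)) B"
proof -
  define B where "B = (if \<exists>D\<in>\<B>. Suc n \<in> D then insert (Suc n) B' else B')"
  have "B' \<subseteq> ground n"
    using max matroid_bases_subset_ground[OF matroid_bases_contract[OF mb]]
    by (auto simp: unique_max_weight_def)
  then have B': "B - {Suc n} = B'" and Bk: "indic B (Suc n) = of_bool (\<exists>D\<in>\<B>. Suc n \<in> D)"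
    by (auto simp: B_def indic_def)
  have "sign_split n x (U - (x (Suc n) - indic B (Suc n))) V S B"
    by (rule sign_split_diff_Suc) (use split in \<open>simp add: B' Bk\<close>)
  then have "sign_split (Suc n) x U V (insert (Suc n) S) B"
    by (rule sign_split_Suc_pos) (use x Bk in auto)
  moreover have "unique_max_weight \<B> (weight (insert (Suc n) S)) B"
    unfolding B_def using weight_less_Suc[OF _ N] max
    by (intro unique_max_weight_contract[OF mb])
      (auto simp: ground_Suc unique_max_weight_insert_Suc[OF matroid_bases_contract[OF mb]])
  ultimately show ?thesis by blast
qed

lemma sign_split_delete:
  assumes N: "Suc n \<le> N" and mb: "matroid_bases (Suc n) \<B>" and x: "x (Suc n) \<le> 0"
    and split: "sign_split n x U (V - (of_bool (\<forall>D\<in>\<B>. Suc n \<in> D) - x (Suc n))) S B'"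
    and max: "unique_max_weight (delete_bases (Suc n) \<B>) (weight S) B'"
  shows "\<exists>B. sign_split (Suc n) x U V S B \<and> unique_max_weight \<B> (weight S) B"
proof -
  define B where "B = (if \<forall>D\<in>\<B>. Suc n \<in> D then insert (Suc n) B' else B')"
  have "B' \<subseteq> ground n" and "S \<subseteq> ground n"
    using max split matroid_bases_subset_ground[OF matroid_bases_delete[OF mb]]
    by (auto simp: unique_max_weight_def sign_split_def)
  then have B': "B - {Suc n} = B'" and Bk: "indic B (Suc n) = of_bool (\<forall>D\<in>\<B>. Suc n \<in> D)"
    and S: "Suc n \<notin> S"
    by (auto simp: B_def indic_def)
  have "sign_split n x U (V - (indic B (Suc n) - x (Suc n))) S B"
    by (rule sign_split_diff_Suc) (use split in \<open>simp add: B' Bk\<close>)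
  then have "sign_split (Suc n) x U V S B"
    by (rule sign_split_Suc_neg) (use x Bk in auto)
  moreover have "unique_max_weight \<B> (weight S) B"
    unfolding B_def using weight_Suc_less[OF S N] max
    by (intro unique_max_weight_delete[OF mb]) (auto simp: ground_Suc)
  ultimately show ?thesis by blast
qed

lemma sign_split_exists:
  assumes "n \<le> N" "matroid_bases n \<B>" "\<forall>i\<in>ground n. x i \<in> \<int>" "p \<in> matroid_polytope \<B>"
    "in_Delta_Nabla n U V (\<lambda>i. x i - p i)"
  shows "\<exists>S B. sign_split n x U V S B \<and> unique_max_weight \<B> (weight S) B"
  using assms
proof (induction n arbitrary: \<B> U V p)
  case 0
  then have "\<B> = {{}}" by (auto simp: matroid_bases_def ground_def)
  moreover have "in_Delta_Nabla 0 U V (\<lambda>i. x i - indic {} i)"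
    using 0(5) by (simp add: in_Delta_Nabla_def ground_def)
  ultimately have "sign_split 0 x U V {} {} \<and> unique_max_weight \<B> (weight {}) {}"
    by (simp add: sign_split_def unique_max_weight_def ground_def)
  then show ?case by blast
next
  case (Suc n)
  note mb = Suc.prems(2)
  have IH: "\<exists>S B. sign_split n x U' V' S B \<and> unique_max_weight \<B>' (weight S) B"
    if "matroid_bases n \<B>'" "p' \<in> matroid_polytope \<B>'" "in_Delta_Nabla n U' V' (\<lambda>i. x i - p' i)"
    for \<B>' U' V' p'
    using Suc.IH[OF _ that(1) _ that(2,3)] Suc.prems(1,3) by (simp add: ground_Suc)
  have "x (Suc n) \<in> \<int>" using Suc.prems(3) by (simp add: ground_Suc)
  then consider "1 \<le> x (Suc n)" | "x (Suc n) \<le> 0" using Ints_le_0_or_ge_1 by blast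
  then show ?case
  proof cases
    case 1
    then obtain p' where "p' \<in> matroid_polytope (contract_bases (Suc n) \<B>)"
      "in_Delta_Nabla n (U - (x (Suc n) - of_bool (\<exists>D\<in>\<B>. Suc n \<in> D))) V (\<lambda>i. x i - p' i)"
      using in_Delta_Nabla_contract[OF mb Suc.prems(4,5)] by blast
    then show ?thesis
      using IH[OF matroid_bases_contract[OF mb]] sign_split_contract[OF Suc.prems(1) mb, where x=x] 1
      by blast
  next
    case 2
    then obtain p' where "p' \<in> matroid_polytope (delete_bases (Suc n) \<B>)"
      "in_Delta_Nabla n U (V - (of_bool (\<forall>D\<in>\<B>. Suc n \<in> D) - x (Suc n))) (\<lambda>i. x i - p' i)"
      using in_Delta_Nabla_delete[OF mb Suc.prems(4,5)] by blast
    then show ?thesis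
      using IH[OF matroid_bases_delete[OF mb]] sign_split_delete[OF Suc.prems(1) mb, where x=x] 2
      by blast
  qed
qed

end

section \<open>The regular mixed subdivision\<close>

lemma lfun_dot: "lfun n w z = dot n w (fst z) - snd z"
  by (simp add: lfun_def dot_def)

lemma lfun_add3:
  "lfun n w ((\<lambda>i. fst a i + fst b i + fst c i), snd a + snd b + snd c)
    = lfun n w a + lfun n w b + lfun n w c"
  by (simp add: lfun_def distrib_left sum.distrib)

lemma lfun_combination:
  "lfun n w ((\<lambda>j. \<Sum>i\<in>I. c i * fst (f i) j), \<Sum>i\<in>I. c i * snd (f i)) = (\<Sum>i\<in>I. c i * lfun n w (f i))"
  using dot_combination[of n w c "\<lambda>i. fst (f i)" I]
  by (simp add: lfun_def dot_def sum_subtractf right_diff_distrib)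

lemma unitv_combination_apply: "finite I \<Longrightarrow> (\<Sum>i\<in>I. c i * unitv i j) = (if j \<in> I then c j else 0)"
  by (simp add: unitv_def if_distrib[of "(*) (c _)"] cong: if_cong)

lemma sum_mult_unitv: "finite I \<Longrightarrow> (\<Sum>j\<in>I. c j * unitv i j) = (if i \<in> I then c i else 0)"
  by (simp add: unitv_def if_distrib[of "(*) (c _)"] cong: if_cong)

lemma dot_unitv: "i \<in> ground n \<Longrightarrow> dot n d (unitv i) = d i"
  using sum_mult_unitv[of "ground n" d i] by (simp add: dot_def)

lemma lfun_unitv: "i \<in> ground n \<Longrightarrow> lfun n w (\<lambda>j. r * unitv i j, h) = w i * r - h"
  using sum_mult_unitv[of "ground n" "\<lambda>j. w j * r" i] by (simp add: lfun_def ac_simps)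

lemma lconv_obtain:
  assumes "y \<in> lconv V"
  obtains S c where "finite S" "S \<subseteq> V" "\<forall>a\<in>S. 0 \<le> c a" "sum c S = 1"
    "y = ((\<lambda>i. \<Sum>a\<in>S. c a * fst a i), \<Sum>a\<in>S. c a * snd a)"
  using assms unfolding lconv_def by blast

lemma lfun_lconv_le:
  assumes "y \<in> lconv V" and "\<forall>v\<in>V. lfun n w v \<le> M"
  shows "lfun n w y \<le> M"
proof -
  obtain S c where S: "finite S" "S \<subseteq> V" "\<forall>a\<in>S. 0 \<le> c a" "sum c S = 1"
    "y = ((\<lambda>i. \<Sum>a\<in>S. c a * fst a i), \<Sum>a\<in>S. c a * snd a)"
    using lconv_obtain[OF assms(1)] .
  have "lfun n w y = (\<Sum>a\<in>S. c a * lfun n w a)"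
    using lfun_combination[of n w c id S] S(5) by simp
  also have "\<dots> \<le> (\<Sum>a\<in>S. c a * M)" using S assms(2) by (intro sum_mono mult_left_mono) auto
  finally show ?thesis using S(4) by (simp add: sum_distrib_right[symmetric])
qed

lemma sum_lconv:
  assumes "y \<in> lconv V" and "\<forall>v\<in>V. (\<Sum>j\<in>ground n. fst v j) = K"
  shows "(\<Sum>j\<in>ground n. fst y j) = K"
proof -
  obtain S c where S: "finite S" "S \<subseteq> V" "\<forall>a\<in>S. 0 \<le> c a" "sum c S = 1"
    "y = ((\<lambda>i. \<Sum>a\<in>S. c a * fst a i), \<Sum>a\<in>S. c a * snd a)"
    using lconv_obtain[OF assms(1)] .
  have "(\<Sum>j\<in>ground n. fst y j) = (\<Sum>a\<in>S. c a * K)"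
    using dot_combination[of n "\<lambda>_. 1" c fst S] S(2,5) assms(2)
    by (auto simp: dot_def intro!: sum.cong)
  then show ?thesis using S(4) by (simp add: sum_distrib_right[symmetric])
qed

lemma Lift_obtain:
  assumes "z \<in> Lift n \<B> t u \<alpha> \<beta>"
  obtains a b c where "a \<in> lift_Delta n u \<alpha>" "b \<in> lift_P \<B>" "c \<in> lift_Nabla n t \<beta>"
    "z = ((\<lambda>i. fst a i + fst b i + fst c i), snd a + snd b + snd c)"
  using assms unfolding Lift_def lmsum_def by fastforce

lemma Lift_intro:
  "a \<in> lift_Delta n u \<alpha> \<Longrightarrow> b \<in> lift_P \<B> \<Longrightarrow> c \<in> lift_Nabla n t \<beta> \<Longrightarrow>
    ((\<lambda>i. fst a i + fst b i + fst c i), snd a + snd b + snd c) \<in> Lift n \<B> t u \<alpha> \<beta>"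
  unfolding Lift_def lmsum_def by fastforce

lemma sum_Lift:
  assumes mb: "matroid_bases n \<B>" and B: "B \<in> \<B>" and z: "z \<in> Lift n \<B> t u \<alpha> \<beta>"
  shows "(\<Sum>j\<in>ground n. fst z j) = real u + card B - real t"
proof -
  obtain a b c where abc: "a \<in> lift_Delta n u \<alpha>" "b \<in> lift_P \<B>" "c \<in> lift_Nabla n t \<beta>"
    "z = ((\<lambda>i. fst a i + fst b i + fst c i), snd a + snd b + snd c)"
    using Lift_obtain[OF z] .
  have unitv_sum: "(\<Sum>j\<in>ground n. r * unitv i j) = r" if "i \<in> ground n" for i r
    using sum_mult_unitv[of "ground n" "\<lambda>_. r" i] that by simp
  have "(\<Sum>j\<in>ground n. fst a j) = real u"
    using abc(1) unitv_sum unfolding lift_Delta_def by (intro sum_lconv) auto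
  moreover have "(\<Sum>j\<in>ground n. fst c j) = - real t"
    using abc(3) unitv_sum[of _ "- real t"] unfolding lift_Nabla_def by (intro sum_lconv) auto
  moreover have "(\<Sum>j\<in>ground n. fst b j) = card B"
    using abc(2) sum_matroid_polytope[OF mb B] by (auto simp: lift_P_def)
  ultimately show ?thesis using abc(4) by (simp add: sum.distrib)
qed

lemma cellG_eq:
  assumes mb: "matroid_bases n \<B>" and B: "unique_max_weight \<B> w B"
  shows "cellG n \<B> w = {indic B}"
proof -
  have B_in: "indic B \<in> matroid_polytope \<B>" "dot n w (indic B) = sum w B"
    using B indic_mem_matroid_polytope dot_indic matroid_bases_subset_ground[OF mb]
    by (auto simp: unique_max_weight_def)
  have "(indic B, 0) \<in> argmax_face (lfun n w) (lift_P \<B>)"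
    using B_in dot_matroid_polytope_le[OF mb B] by (auto simp: argmax_face_def lift_P_def lfun_dot)
  moreover have "z = (indic B, 0)" if z: "z \<in> argmax_face (lfun n w) (lift_P \<B>)" for z
  proof -
    obtain p where p: "p \<in> matroid_polytope \<B>" "z = (p, 0)"
      using z unfolding argmax_face_def lift_P_def by blast
    have "lfun n w (indic B, 0) \<le> lfun n w z"
      using z B_in(1) unfolding argmax_face_def lift_P_def by blast
    then have "sum w B \<le> dot n w p" using p(2) B_in(2) by (simp add: lfun_dot)
    with p show ?thesis using dot_matroid_polytope_eq[OF mb B] by simp
  qed
  ultimately have "argmax_face (lfun n w) (lift_P \<B>) = {(indic B, 0)}" by blast
  then show ?thesis by (simp add: cellG_def)
qed

text \<open>A point of a face of L determines the height above it, and both faces share p and q.\<close>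
lemma argmax_face_common_points:
  assumes p: "p \<in> fst ` argmax_face (lfun n w) L" "p \<in> fst ` argmax_face (lfun n w') L"
    and q: "q \<in> fst ` argmax_face (lfun n w) L" "q \<in> fst ` argmax_face (lfun n w') L"
  shows "dot n (\<lambda>i. w' i - w i) p = dot n (\<lambda>i. w' i - w i) q"
proof -
  obtain hp where hp: "(p, hp) \<in> L" "\<forall>y\<in>L. lfun n w y \<le> lfun n w (p, hp)"
    using p(1) unfolding argmax_face_def by force
  obtain hp' where hp': "(p, hp') \<in> L" "\<forall>y\<in>L. lfun n w' y \<le> lfun n w' (p, hp')"
    using p(2) unfolding argmax_face_def by force
  obtain hq where hq: "(q, hq) \<in> L" "\<forall>y\<in>L. lfun n w y \<le> lfun n w (q, hq)"
    using q(1) unfolding argmax_face_def by force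
  obtain hq' where hq': "(q, hq') \<in> L" "\<forall>y\<in>L. lfun n w' y \<le> lfun n w' (q, hq')"
    using q(2) unfolding argmax_face_def by force
  have "hp = hp'"
    using hp(2)[rule_format, OF hp'(1)] hp'(2)[rule_format, OF hp(1)] by (simp add: lfun_dot)
  moreover have "hq = hq'"
    using hq(2)[rule_format, OF hq'(1)] hq'(2)[rule_format, OF hq(1)] by (simp add: lfun_dot)
  moreover have "dot n w p - hp = dot n w q - hq"
    using hp(2)[rule_format, OF hq(1)] hq(2)[rule_format, OF hp(1)] by (simp add: lfun_dot)
  moreover have "dot n w' p - hp' = dot n w' q - hq'"
    using hp'(2)[rule_format, OF hq'(1)] hq'(2)[rule_format, OF hp'(1)] by (simp add: lfun_dot)
  moreover have "dot n (\<lambda>i. w' i - w i) z = dot n w' z - dot n w z" for z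
    unfolding dot_def by (simp add: left_diff_distrib sum_subtractf)
  ultimately show ?thesis by simp
qed

lemma argmax_face_shift: "(\<forall>z\<in>L. f' z = f z + c) \<Longrightarrow> argmax_face f' L = argmax_face f L"
  unfolding argmax_face_def by auto

lemma lconv_unitv_point:
  assumes "\<forall>j. 0 \<le> a j" "\<forall>j. a j \<noteq> 0 \<longrightarrow> j \<in> ground n" "sum a (ground n) = 1"
  shows "((\<lambda>j. r * a j), \<Sum>i\<in>ground n. a i * h i) \<in> lconv ((\<lambda>i. (\<lambda>j. r * unitv i j, h i)) ` ground n)"
    and "lfun n w ((\<lambda>j. r * a j), \<Sum>i\<in>ground n. a i * h i) = (\<Sum>i\<in>ground n. a i * (w i * r - h i))"
proof -
  let ?v = "\<lambda>i. (\<lambda>j. r * unitv i j, h i)"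
  have "(\<Sum>i\<in>ground n. a i * fst (?v i) j) = r * a j" for j
    using unitv_combination_apply[of "ground n" "\<lambda>i. r * a i" j] assms(2) by (auto simp: ac_simps)
  then have eq: "((\<lambda>j. r * a j), \<Sum>i\<in>ground n. a i * h i)
      = ((\<lambda>j. \<Sum>i\<in>ground n. a i * fst (?v i) j), \<Sum>i\<in>ground n. a i * snd (?v i))"
    by simp
  show "((\<lambda>j. r * a j), \<Sum>i\<in>ground n. a i * h i) \<in> lconv (?v ` ground n)"
    unfolding eq using assms by (intro lconv_combination_mem) auto
  show "lfun n w ((\<lambda>j. r * a j), \<Sum>i\<in>ground n. a i * h i) = (\<Sum>i\<in>ground n. a i * (w i * r - h i))"
    unfolding eq lfun_combination by (intro sum.cong) (auto simp: lfun_unitv)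
qed

locale top_cell = increasing_heights \<alpha> \<beta> "real u" "real t" n
  for \<alpha> \<beta> :: "nat \<Rightarrow> real" and u t n :: nat +
  fixes \<B> :: "nat set set" and S B :: "nat set"
  assumes mb: "matroid_bases n \<B>" and n_pos: "1 \<le> n" and S_ground: "S \<subseteq> ground n"
    and max_B: "unique_max_weight \<B> (weight S) B"
begin

lemma one_in_ground: "1 \<in> ground n"
  using n_pos by (simp add: ground_def)

lemma Delta_vertex_le: "i \<in> ground n \<Longrightarrow> weight S i * real u - \<alpha> i \<le> 0"
proof -
  assume i: "i \<in> ground n"
  have "\<alpha> 1 / real u \<le> \<alpha> i / real u" "\<beta> 1 / real t \<le> \<beta> i / real t"
    using \<alpha>_le[of 1 i] \<beta>_le[of 1 i] i u_pos t_pos by (auto simp: ground_def divide_right_mono)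
  then have "weight S i \<le> \<alpha> i / real u" by (simp add: weight_def)
  then show ?thesis using u_pos by (simp add: pos_le_divide_eq)
qed

lemma Delta_vertex_eq: "i \<in> insert 1 S \<Longrightarrow> weight S i * real u - \<alpha> i = 0"
  using u_pos t_pos by (auto simp: weight_def)

lemma Nabla_vertex_le:
  "i \<in> ground n \<Longrightarrow> weight S i * - real t - \<beta> i \<le> weight S 1 * - real t - \<beta> 1"
proof (cases "i \<in> S")
  case True
  assume i: "i \<in> ground n"
  have "\<alpha> 1 \<le> \<alpha> i" "\<beta> 1 \<le> \<beta> i" using \<alpha>_le[of 1 i] \<beta>_le[of 1 i] i by (auto simp: ground_def)
  then have "\<alpha> 1 * real t / real u \<le> \<alpha> i * real t / real u"
    using u_pos t_pos by (simp add: divide_right_mono)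
  with True \<open>\<beta> 1 \<le> \<beta> i\<close> show ?thesis by (simp add: weight_def)
qed (use t_pos in \<open>simp add: weight_def field_simps\<close>)

lemma Nabla_vertex_eq:
  "i \<in> insert 1 (ground n - S) \<Longrightarrow> weight S i * - real t - \<beta> i = weight S 1 * - real t - \<beta> 1"
  using t_pos by (auto simp: weight_def field_simps)

lemma lfun_Lift_le:
  assumes "z \<in> Lift n \<B> t u \<alpha> \<beta>"
  shows "lfun n (weight S) z \<le> sum (weight S) B + (weight S 1 * - real t - \<beta> 1)"
proof -
  obtain a b c where abc: "a \<in> lift_Delta n u \<alpha>" "b \<in> lift_P \<B>" "c \<in> lift_Nabla n t \<beta>"
    "z = ((\<lambda>i. fst a i + fst b i + fst c i), snd a + snd b + snd c)"
    using Lift_obtain[OF assms] .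
  have "lfun n (weight S) a \<le> 0"
    using abc(1) Delta_vertex_le unfolding lift_Delta_def
    by (intro lfun_lconv_le) (auto simp: lfun_unitv)
  moreover have "lfun n (weight S) c \<le> weight S 1 * - real t - \<beta> 1"
    using abc(3) Nabla_vertex_le unfolding lift_Nabla_def
    by (intro lfun_lconv_le) (auto simp: lfun_unitv[where r="- real t", simplified])
  moreover have "lfun n (weight S) b \<le> sum (weight S) B"
    using abc(2) dot_matroid_polytope_le[OF mb max_B] by (auto simp: lift_P_def lfun_dot)
  ultimately show ?thesis unfolding abc(4) lfun_add3 by linarith
qed

lemma lift_Delta_face_point:
  assumes "\<forall>j. 0 \<le> a j" "\<forall>j. a j \<noteq> 0 \<longrightarrow> j \<in> insert 1 S" "sum a (ground n) = 1"
  shows "((\<lambda>j. real u * a j), \<Sum>i\<in>ground n. a i * \<alpha> i) \<in> lift_Delta n u \<alpha>"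
    and "lfun n (weight S) ((\<lambda>j. real u * a j), \<Sum>i\<in>ground n. a i * \<alpha> i) = 0"
proof -
  have a_ground: "\<forall>j. a j \<noteq> 0 \<longrightarrow> j \<in> ground n" using assms(2) S_ground one_in_ground by blast
  show "((\<lambda>j. real u * a j), \<Sum>i\<in>ground n. a i * \<alpha> i) \<in> lift_Delta n u \<alpha>"
    unfolding lift_Delta_def using assms(1) a_ground assms(3) by (rule lconv_unitv_point)
  have zero: "a i * (weight S i * real u - \<alpha> i) = 0" for i
    using assms(2) Delta_vertex_eq[of i] by (cases "a i = 0") auto
  have "lfun n (weight S) ((\<lambda>j. real u * a j), \<Sum>i\<in>ground n. a i * \<alpha> i)
      = (\<Sum>i\<in>ground n. a i * (weight S i * real u - \<alpha> i))"
    by (rule lconv_unitv_point(2)[OF assms(1) a_ground assms(3)])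
  also have "\<dots> = 0" by (simp add: zero)
  finally show "lfun n (weight S) ((\<lambda>j. real u * a j), \<Sum>i\<in>ground n. a i * \<alpha> i) = 0" .
qed

lemma lift_Nabla_face_point:
  assumes "\<forall>j. 0 \<le> b j" "\<forall>j. b j \<noteq> 0 \<longrightarrow> j \<in> insert 1 (ground n - S)" "sum b (ground n) = 1"
  shows "((\<lambda>j. - real t * b j), \<Sum>i\<in>ground n. b i * \<beta> i) \<in> lift_Nabla n t \<beta>"
    and "lfun n (weight S) ((\<lambda>j. - real t * b j), \<Sum>i\<in>ground n. b i * \<beta> i)
      = weight S 1 * - real t - \<beta> 1"
proof -
  let ?M = "weight S 1 * - real t - \<beta> 1"
  have b_ground: "\<forall>j. b j \<noteq> 0 \<longrightarrow> j \<in> ground n" using assms(2) one_in_ground by blast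
  show "((\<lambda>j. - real t * b j), \<Sum>i\<in>ground n. b i * \<beta> i) \<in> lift_Nabla n t \<beta>"
    unfolding lift_Nabla_def using assms(1) b_ground assms(3) by (rule lconv_unitv_point)
  have const: "b i * (weight S i * - real t - \<beta> i) = b i * ?M" for i
    using assms(2) Nabla_vertex_eq[of i] by (cases "b i = 0") auto
  have "lfun n (weight S) ((\<lambda>j. - real t * b j), \<Sum>i\<in>ground n. b i * \<beta> i)
      = (\<Sum>i\<in>ground n. b i * (weight S i * - real t - \<beta> i))"
    by (rule lconv_unitv_point(2)[OF assms(1) b_ground assms(3)])
  also have "\<dots> = (\<Sum>i\<in>ground n. b i * ?M)" by (simp only: const)
  finally show "lfun n (weight S) ((\<lambda>j. - real t * b j), \<Sum>i\<in>ground n. b i * \<beta> i) = ?M"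
    using assms(3) by (simp add: sum_distrib_right[symmetric])
qed

lemma mem_cell:
  assumes a: "\<forall>j. 0 \<le> a j" "\<forall>j. a j \<noteq> 0 \<longrightarrow> j \<in> insert 1 S" "sum a (ground n) = 1"
    and b: "\<forall>j. 0 \<le> b j" "\<forall>j. b j \<noteq> 0 \<longrightarrow> j \<in> insert 1 (ground n - S)" "sum b (ground n) = 1"
  shows "(\<lambda>j. real u * a j + indic B j - real t * b j) \<in> cell n \<B> t u \<alpha> \<beta> (weight S)"
proof -
  let ?w = "weight S"
  define zD where "zD = ((\<lambda>j. real u * a j), \<Sum>i\<in>ground n. a i * \<alpha> i)"
  define zN where "zN = ((\<lambda>j. - real t * b j), \<Sum>i\<in>ground n. b i * \<beta> i)"
  define zP where "zP = (indic B, 0::real)"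
  define z where "z = ((\<lambda>i. fst zD i + fst zP i + fst zN i), snd zD + snd zP + snd zN)"
  have B: "B \<in> \<B>" using max_B by (simp add: unique_max_weight_def)
  have zP: "zP \<in> lift_P \<B>" "lfun n ?w zP = sum ?w B"
    using indic_mem_matroid_polytope[OF B] dot_indic[OF matroid_bases_subset_ground[OF mb B]]
    unfolding zP_def lift_P_def by (auto simp: lfun_dot)
  have "z \<in> Lift n \<B> t u \<alpha> \<beta>"
    unfolding z_def zD_def zN_def
    using lift_Delta_face_point(1)[OF a] zP(1) lift_Nabla_face_point(1)[OF b] by (rule Lift_intro)
  moreover have "lfun n ?w z = sum ?w B + (weight S 1 * - real t - \<beta> 1)"
    unfolding z_def lfun_add3 zP(2)
    using lift_Delta_face_point(2)[OF a] lift_Nabla_face_point(2)[OF b] by (simp add: zD_def zN_def)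
  ultimately have "z \<in> argmax_face (lfun n ?w) (Lift n \<B> t u \<alpha> \<beta>)"
    using lfun_Lift_le by (simp add: argmax_face_def)
  moreover have "fst z = (\<lambda>j. real u * a j + indic B j - real t * b j)"
    by (simp add: z_def zD_def zN_def zP_def)
  ultimately show ?thesis unfolding cell_def by (metis rev_image_eqI)
qed

lemma cell_subset_shift_const:
  assumes sub: "cell n \<B> t u \<alpha> \<beta> (weight S) \<subseteq> cell n \<B> t u \<alpha> \<beta> w'" and i: "i \<in> ground n"
  shows "w' i - weight S i = w' 1 - weight S 1"
proof -
  let ?d = "\<lambda>i. w' i - weight S i"
  note one = one_in_ground
  define P where "P i k = (\<lambda>j. real u * unitv i j + indic B j - real t * unitv k j)" for i k
  have P_cell: "P i k \<in> cell n \<B> t u \<alpha> \<beta> (weight S)"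
    if "i \<in> insert 1 S" "k \<in> insert 1 (ground n - S)" for i k
  proof -
    have "i \<in> ground n" using that(1) one S_ground by blast
    then show ?thesis
      unfolding P_def using that sum_mult_unitv[of "ground n" "\<lambda>_. 1"] one
      by (intro mem_cell) (auto simp: unitv_def)
  qed
  text \<open>The points P i k lie on both faces, which forces w' - w to be constant.\<close>
  have same: "dot n ?d (P i k) = dot n ?d (P 1 1)"
    if "i \<in> insert 1 S" "k \<in> insert 1 (ground n - S)" for i k
    using P_cell[OF that] P_cell[of 1 1] sub
    by (intro argmax_face_common_points[of _ n _ "Lift n \<B> t u \<alpha> \<beta>"]) (auto simp: cell_def)
  have dot_P: "dot n ?d (P i k) = ?d i * real u + dot n ?d (indic B) - ?d k * real t"
    if "i \<in> ground n" "k \<in> ground n" for i k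
    unfolding P_def dot_linear using that by (simp add: dot_unitv)
  show ?thesis
  proof (cases "i \<in> S")
    case True
    then have "?d i * real u = ?d 1 * real u"
      using same[of i 1] dot_P[OF i one] dot_P[OF one one] by simp
    then show ?thesis using u_pos by simp
  next
    case False
    then have "?d i * real t = ?d 1 * real t"
      using same[of 1 i] i dot_P[OF one i] dot_P[OF one one] by simp
    then show ?thesis using t_pos by simp
  qed
qed

lemma cell_maximal:
  assumes sub: "cell n \<B> t u \<alpha> \<beta> (weight S) \<subseteq> cell n \<B> t u \<alpha> \<beta> w'"
  shows "cell n \<B> t u \<alpha> \<beta> w' = cell n \<B> t u \<alpha> \<beta> (weight S)"
proof -
  let ?w = "weight S" and ?L = "Lift n \<B> t u \<alpha> \<beta>"
  let ?c = "w' 1 - ?w 1"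
  have "lfun n w' z = lfun n ?w z + ?c * (real u + card B - real t)" if z: "z \<in> ?L" for z
  proof -
    have "lfun n w' z - lfun n ?w z = (\<Sum>j\<in>ground n. (w' j - ?w j) * fst z j)"
      by (simp add: lfun_def sum_subtractf left_diff_distrib)
    also have "\<dots> = ?c * (\<Sum>j\<in>ground n. fst z j)"
      using cell_subset_shift_const[OF sub] by (simp add: sum_distrib_left)
    also have "\<dots> = ?c * (real u + card B - real t)"
      using sum_Lift[OF mb _ z] max_B by (simp add: unique_max_weight_def)
    finally show ?thesis by simp
  qed
  then have "argmax_face (lfun n w') ?L = argmax_face (lfun n ?w) ?L"
    by (intro argmax_face_shift) blast
  then show ?thesis by (simp add: cell_def)
qed

lemma x_mem_cell:
  assumes split: "sign_split n x (real u) (real t) S B" and x0: "\<forall>j. j \<notin> ground n \<longrightarrow> x j = 0"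
  shows "x \<in> cell n \<B> t u \<alpha> \<beta> (weight S)"
proof -
  let ?d = "\<lambda>j. x j - indic B j"
  have fits: "in_Delta_Nabla n (real u) (real t) ?d" using split by (simp add: sign_split_def)
  obtain a b where a: "\<forall>j. 0 \<le> a j" "\<forall>j. a j \<noteq> 0 \<longrightarrow> j \<in> ground n \<and> (j = 1 \<or> 0 < ?d j)"
      "sum a (ground n) = 1"
    and b: "\<forall>j. 0 \<le> b j" "\<forall>j. b j \<noteq> 0 \<longrightarrow> j \<in> ground n \<and> (j = 1 \<or> ?d j < 0)"
      "sum b (ground n) = 1"
    and d: "\<forall>j\<in>ground n. ?d j = real u * a j - real t * b j"
    by (rule in_Delta_Nabla_decompose[OF fits one_in_ground u_pos t_pos])
  have "j \<in> S" if "j \<in> ground n" "0 < ?d j" for j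
    using split that by (force simp: sign_split_def)
  then have "\<forall>j. a j \<noteq> 0 \<longrightarrow> j \<in> insert 1 S" using a(2) by blast
  have "j \<in> ground n - S" if "j \<in> ground n" "?d j < 0" for j
    using split that by (force simp: sign_split_def)
  then have "\<forall>j. b j \<noteq> 0 \<longrightarrow> j \<in> insert 1 (ground n - S)" using b(2) by blast
  with \<open>\<forall>j. a j \<noteq> 0 \<longrightarrow> j \<in> insert 1 S\<close> a(1,3) b(1,3)
  have "(\<lambda>j. real u * a j + indic B j - real t * b j) \<in> cell n \<B> t u \<alpha> \<beta> (weight S)"
    by (intro mem_cell)
  moreover have "(\<lambda>j. real u * a j + indic B j - real t * b j) = x"
  proof
    fix j
    have "B \<subseteq> ground n"
      using matroid_bases_subset_ground[OF mb] max_B by (simp add: unique_max_weight_def)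
    show "real u * a j + indic B j - real t * b j = x j"
    proof (cases "j \<in> ground n")
      case True
      with d have "x j - indic B j = real u * a j - real t * b j" by blast
      then show ?thesis by linarith
    next
      case False
      then have "a j = 0" "b j = 0" "indic B j = 0"
        using a(2) b(2) \<open>B \<subseteq> ground n\<close> by (auto simp: indic_def)
      with False x0 show ?thesis by simp
    qed
  qed
  ultimately show ?thesis by simp
qed

end

lemma increasing_chain:
  fixes f :: "nat \<Rightarrow> real"
  assumes "\<forall>i\<in>{1..<N}. f i < f (Suc i)"
  shows "1 \<le> i \<Longrightarrow> i < j \<Longrightarrow> j \<le> N \<Longrightarrow> f i < f j"
proof (induction j)
  case (Suc j)
  then show ?case using assms by (cases "i = j") (auto intro: less_trans)
qed simp

lemma simplex_memD:
  assumes "a \<in> simplex n"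
  shows "0 \<le> a j" and "j \<notin> ground n \<Longrightarrow> a j = 0" and "(\<Sum>j\<in>ground n. a j) = 1"
proof -
  obtain V c where V: "V \<subseteq> unitv ` ground n" "\<forall>v\<in>V. 0 \<le> c v" "sum c V = 1"
    "a = (\<lambda>j. \<Sum>v\<in>V. c v * v j)"
    using assms unfolding simplex_def conv_def by blast
  show "0 \<le> a j" using V by (auto simp: unitv_def intro!: sum_nonneg)
  show "j \<notin> ground n \<Longrightarrow> a j = 0" using V by (auto simp: unitv_def intro!: sum.neutral)
  have "dot n (\<lambda>_. 1) a = (\<Sum>v\<in>V. c v * 1)"
    using V(1,4) dot_combination[of n "\<lambda>_. 1" c "\<lambda>v. v" V] by (auto simp: dot_unitv intro!: sum.cong)
  then show "(\<Sum>j\<in>ground n. a j) = 1" using V(3) by (simp add: dot_def)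
qed

lemma mixed_polytope_memD:
  assumes mb: "matroid_bases n \<B>" and x: "x \<in> mixed_polytope n \<B> t u"
  shows "1 \<le> n" and "\<forall>j. j \<notin> ground n \<longrightarrow> x j = 0"
    and "\<exists>p\<in>matroid_polytope \<B>. in_Delta_Nabla n (real u) (real t) (\<lambda>i. x i - p i)"
proof -
  obtain a p b where a: "a \<in> simplex n" and p: "p \<in> matroid_polytope \<B>" and b: "b \<in> simplex n"
    and x_eq: "x = (\<lambda>i. real u * a i + p i - real t * b i)"
    using x unfolding mixed_polytope_def msum_def scale_set_def by auto
  note a' = simplex_memD[OF a] and b' = simplex_memD[OF b]
  show "1 \<le> n" using a'(3) by (cases n) (auto simp: ground_def)
  obtain I c where I: "I \<subseteq> \<B>" "p = (\<lambda>j. \<Sum>D\<in>I. c D * indic D j)"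
    using matroid_polytope_obtain[OF p] by metis
  have "p j = 0" if "j \<notin> ground n" for j
  proof -
    have "\<forall>D\<in>I. j \<notin> D" using that I(1) matroid_bases_subset_ground[OF mb] by blast
    then show ?thesis using I(2) by (simp add: indic_def)
  qed
  then show "\<forall>j. j \<notin> ground n \<longrightarrow> x j = 0" using a'(2) b'(2) x_eq by simp
  have d: "x i - p i = real u * a i - real t * b i" for i using x_eq by simp
  have "(\<Sum>i\<in>ground n. max (x i - p i) 0) \<le> (\<Sum>i\<in>ground n. real u * a i)"
    using a'(1) b'(1) unfolding d by (intro sum_mono) auto
  moreover have "(\<Sum>i\<in>ground n. max (- (x i - p i)) 0) \<le> (\<Sum>i\<in>ground n. real t * b i)"
    using a'(1) b'(1) unfolding d by (intro sum_mono) auto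
  moreover have "(\<Sum>i\<in>ground n. x i - p i) = real u * (\<Sum>i\<in>ground n. a i) - real t * (\<Sum>i\<in>ground n. b i)"
    unfolding d by (simp add: sum_subtractf sum_distrib_left)
  ultimately show "\<exists>p\<in>matroid_polytope \<B>. in_Delta_Nabla n (real u) (real t) (\<lambda>i. x i - p i)"
    using p a'(3) b'(3) by (auto simp: in_Delta_Nabla_def sum_distrib_left[symmetric])
qed

theorem mainTheorem6:
  fixes n t u :: nat and \<B> :: "nat set set" and \<alpha> \<beta> :: "nat \<Rightarrow> real" and x :: "nat \<Rightarrow> real"
  assumes "matroid_bases n \<B>"
    and "t > 0" and "u > 0"
    and "0 < \<alpha> 1" and "\<forall>i\<in>{1..<n}. \<alpha> i < \<alpha> (Suc i)"
    and "0 < \<beta> 1" and "\<forall>i\<in>{1..<n}. \<beta> i < \<beta> (Suc i)"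
    and "x \<in> mixed_polytope n \<B> t u"
    and "\<forall>i\<in>ground n. x i \<in> \<int>"
  shows "\<exists>C. top_degree_face n \<B> t u \<alpha> \<beta> C \<and> x \<in> C"
proof -
  note mb = assms(1)
  obtain p where p: "p \<in> matroid_polytope \<B>" "in_Delta_Nabla n (real u) (real t) (\<lambda>i. x i - p i)"
    using mixed_polytope_memD(3)[OF mb assms(8)] by blast
  interpret increasing_heights \<alpha> \<beta> "real u" "real t" n
    using assms(2,3) increasing_chain[OF assms(5)] increasing_chain[OF assms(7)]
    by unfold_locales simp_all
  obtain S B where SB: "sign_split n x (real u) (real t) S B" "unique_max_weight \<B> (weight S) B"
    using sign_split_exists[OF le_refl mb assms(9) p] by blast
  interpret top_cell \<alpha> \<beta> u t n \<B> S B
    using mb mixed_polytope_memD(1)[OF mb assms(8)] SB by unfold_locales (auto simp: sign_split_def)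
  let ?C = "cell n \<B> t u \<alpha> \<beta> (weight S)"
  have "top_degree_face n \<B> t u \<alpha> \<beta> ?C"
    unfolding top_degree_face_def subdivision_def
    using cell_maximal cellG_eq[OF mb SB(2)] max_B by (auto simp: unique_max_weight_def)
  moreover have "x \<in> ?C" using x_mem_cell[OF SB(1)] mixed_polytope_memD(2)[OF mb assms(8)] by blast
  ultimately show ?thesis by blast
qed

end
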